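(* Let $P=K\overline{K}$, $Q=L\overline{L}$ and let $\widetilde{U}=U_{K,L,norm}/J$ where $J$ is the two-sided ideal generated by $K^n-P$, $L^n-Q$, $E^n$, $F^n$ (with the induced bialgebra structure). Put $$\widetilde{R}=\sum_{0\le i,j,m\le n-1}A^{ij}_m(q)\,E^mK^i\otimes F^mK^j+\sum_{0\le i,j,m\le n-1}A^{ij}_m(q)\,E^mL^i\otimes F^mL^j,$$ with the convention $K^0:=P$, $L^0:=Q$ (equivalently $\widetilde{R}=(P\otimes P)\widetilde{R}_{PP}+(Q\otimes Q)\widetilde{R}_{QQ}$ with $\widetilde{R}_{PP},\widetilde{R}_{QQ}$ the two sums). Then $\widetilde{R}$ is a universal near-$R$-matrix: $\Delta^{cop}(b)\widetilde{R}=\widetilde{R}\Delta(b)$ for all $b\in\widetilde{U}$, and there exists $\widetilde{R}^{\dagger}\in\widetilde{U}\otimes\widetilde{U}$ with $\widetilde{R}\widetilde{R}^{\dagger}\widetilde{R}=\widetilde{R}$ and $\widetilde{R}^{\dagger}\widetilde{R}\widetilde{R}^{\dagger}=\widetilde{R}^{\dagger}$.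
   Context: Let $n>1$ be an odd integer and $q$ a primitive $n$-th root of unity. $U_{K,L,norm}$ is the unital associative $\mathbb{C}$-algebra generated by $K,\overline{K},L,\overline{L},E,F$ subject to $K\overline{K}K=K$, $\overline{K}K\overline{K}=\overline{K}$, $K\overline{K}=\overline{K}K$, $L\overline{L}L=L$, $\overline{L}L\overline{L}=\overline{L}$, $L\overline{L}=\overline{L}L$, $K\overline{K}+L\overline{L}=\mathbf{1}$, $KE=q^2EK$, $LE=q^2EL$, $\overline{K}E=q^{-2}E\overline{K}$, $\overline{L}E=q^{-2}E\overline{L}$, $KF=q^{-2}FK$, $LF=q^{-2}FL$, $\overline{K}F=q^2F\overline{K}$, $\overline{L}F=q^2F\overline{L}$, $EF-FE=\frac{(K+L)-(\overline{K}+\overline{L})}{q-q^{-1}}$, with bialgebra structure given by the algebra homomorphisms $\Delta(K)=K\otimes K$, $\Delta(\overline{K})=\overline{K}\otimes\overline{K}$, $\Delta(L)=L\otimes L+L\otimes K+K\otimes L$, $\Delta(\overline{L})=\overline{L}\otimes\overline{L}+\overline{L}\otimes\overline{K}+\overline{K}\otimes\overline{L}$, $\Delta(E)=\mathbf{1}\otimes E+E\otimes(K+L)$, $\Delta(F)=F\otimes\mathbf{1}+(\overline{K}+\overline{L})\otimes F$, $\varepsilon(K)=\varepsilon(\overline{K})=1$, $\varepsilon(L)=\varepsilon(\overline{L})=\varepsilon(E)=\varepsilon(F)=0$. $\Delta^{cop}=\tau\circ\Delta$ with $\tau$ the flip. The coefficients are $A^{ij}_m(q)=\frac{1}{n}\frac{(q-q^{-1})^m}{[m]!}q^{m(m-1)/2+2m(i-j)-2ij}$,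 where $[m]=\frac{q^m-q^{-m}}{q-q^{-1}}$, $[m]!=[1][2]\cdots[m]$. *)

theory Defs
  imports Complex_Main "HOL-Library.Poly_Mapping"
begin

text \<open>The free unital associative C-algebra on generators 'g is then
the algebra of finitely supported functions 'g word \<Rightarrow>0 complex with the
convolution product provided by Poly_Mapping (a ring_1).\<close>

datatype 'g word = Word "'g list"

instantiation word :: (type) monoid_add
begin
definition zero_word :: "'g word" where "zero_word = Word []"
fun plus_word :: "'g word \<Rightarrow> 'g word \<Rightarrow> 'g word" where
  "plus_word (Word u) (Word v) = Word (u @ v)"
instance
proof
  fix a b c :: "'g word"
  show "a + b + c = a + (b + c)" by (cases a; cases b; cases c) simp
  show "0 + a = a" by (cases a) (simp add: zero_word_def)
  show "a + 0 = a" by (cases a) (simp add: zero_word_def)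
qed
end

type_synonym 'g free = "'g word \<Rightarrow>\<^sub>0 complex"

definition gen :: "'g \<Rightarrow> 'g free" where
  "gen x = Poly_Mapping.single (Word [x]) 1"

definition sc :: "complex \<Rightarrow> 'g free" where
  "sc c = Poly_Mapping.single 0 c"

text \<open>The unique unital algebra homomorphism free('g) \<rightarrow> free('h) sending
each generator x to phi x.\<close>
fun word_hom :: "('g \<Rightarrow> 'h free) \<Rightarrow> 'g list \<Rightarrow> 'h free" where
  "word_hom \<phi> [] = 1"
| "word_hom \<phi> (x # xs) = \<phi> x * word_hom \<phi> xs"

definition ext_hom :: "('g \<Rightarrow> 'h free) \<Rightarrow> 'g free \<Rightarrow> 'h free" where
  "ext_hom \<phi> p = (\<Sum>w\<in>Poly_Mapping.keys p.
      sc (Poly_Mapping.lookup p w) * (case w of Word u \<Rightarrow> word_hom \<phi> u))"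

definition rename :: "('g \<Rightarrow> 'h) \<Rightarrow> 'g free \<Rightarrow> 'h free" where
  "rename f = ext_hom (\<lambda>x. gen (f x))"

inductive_set ideal_gen :: "'g free set \<Rightarrow> 'g free set" for S where
  zero: "0 \<in> ideal_gen S"
| base: "s \<in> S \<Longrightarrow> s \<in> ideal_gen S"
| add: "a \<in> ideal_gen S \<Longrightarrow> b \<in> ideal_gen S \<Longrightarrow> a + b \<in> ideal_gen S"
| mult: "x \<in> ideal_gen S \<Longrightarrow> a * x * b \<in> ideal_gen S"

text \<open>Equality in the quotient algebra free('g)/(S).\<close>
definition cong_mod :: "'g free set \<Rightarrow> 'g free \<Rightarrow> 'g free \<Rightarrow> bool" where
  "cong_mod S x y \<longleftrightarrow> x - y \<in> ideal_gen S"

datatype G = K | Kb | L | Lb | E | F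

definition rels_U :: "complex \<Rightarrow> G free set" where
  "rels_U q = (let k = gen K; kb = gen Kb; l = gen L; lb = gen Lb; e = gen E; f = gen F in
    { k*kb*k - k, kb*k*kb - kb, k*kb - kb*k,
      l*lb*l - l, lb*l*lb - lb, l*lb - lb*l,
      k*kb + l*lb - 1,
      k*e - sc (q^2) * e*k, l*e - sc (q^2) * e*l,
      kb*e - sc (inverse q ^ 2) * e*kb, lb*e - sc (inverse q ^ 2) * e*lb,
      k*f - sc (inverse q ^ 2) * f*k, l*f - sc (inverse q ^ 2) * f*l,
      kb*f - sc (q^2) * f*kb, lb*f - sc (q^2) * f*lb,
      e*f - f*e - sc (inverse (q - inverse q)) * ((k + l) - (kb + lb)) })"

definition genP :: "G free" where "genP = gen K * gen Kb"
definition genQ :: "G free" where "genQ = gen L * gen Lb"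

definition rels_Ut :: "complex \<Rightarrow> nat \<Rightarrow> G free set" where
  "rels_Ut q n = rels_U q \<union>
     {gen K ^ n - genP, gen L ^ n - genQ, gen E ^ n, gen F ^ n}"

text \<open>Generators Inl x stand for x \<otimes> 1, Inr x for 1 \<otimes> x.\<close>
definition rels_tensor :: "complex \<Rightarrow> nat \<Rightarrow> (G + G) free set" where
  "rels_tensor q n = rename Inl ` rels_Ut q n \<union> rename Inr ` rels_Ut q n \<union>
     {gen (Inl a) * gen (Inr b) - gen (Inr b) * gen (Inl a) | a b. True}"

definition gl :: "G \<Rightarrow> (G + G) free" where "gl x = gen (Inl x)"
definition gr :: "G \<Rightarrow> (G + G) free" where "gr x = gen (Inr x)"

fun Delta_gen :: "G \<Rightarrow> (G + G) free" where
  "Delta_gen K = gl K * gr K"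
| "Delta_gen Kb = gl Kb * gr Kb"
| "Delta_gen L = gl L * gr L + gl L * gr K + gl K * gr L"
| "Delta_gen Lb = gl Lb * gr Lb + gl Lb * gr Kb + gl Kb * gr Lb"
| "Delta_gen E = gr E + gl E * (gr K + gr L)"
| "Delta_gen F = gl F + (gl Kb + gl Lb) * gr F"

definition Delta :: "G free \<Rightarrow> (G + G) free" where
  "Delta = ext_hom Delta_gen"

definition flip :: "'a + 'a \<Rightarrow> 'a + 'a" where
  "flip z = (case z of Inl a \<Rightarrow> Inr a | Inr a \<Rightarrow> Inl a)"

definition Delta_cop :: "G free \<Rightarrow> (G + G) free" where
  "Delta_cop b = rename flip (Delta b)"

definition qint :: "complex \<Rightarrow> nat \<Rightarrow> complex" where
  "qint q m = (q ^ m - inverse q ^ m) / (q - inverse q)"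

definition qfact :: "complex \<Rightarrow> nat \<Rightarrow> complex" where
  "qfact q m = (\<Prod>k = 1..m. qint q k)"

definition Acoef :: "complex \<Rightarrow> nat \<Rightarrow> nat \<Rightarrow> nat \<Rightarrow> nat \<Rightarrow> complex" where
  "Acoef q n i j m = (1 / of_nat n) * ((q - inverse q) ^ m / qfact q m) *
     q powi (int (m * (m - 1) div 2) + 2 * int m * (int i - int j) - 2 * int i * int j)"

definition Kpow :: "G free \<Rightarrow> nat \<Rightarrow> G free" where
  "Kpow P0 i = (if i = 0 then P0 else gen K ^ i)"

definition Lpow :: "G free \<Rightarrow> nat \<Rightarrow> G free" where
  "Lpow Q0 i = (if i = 0 then Q0 else gen L ^ i)"

definition Rtilde :: "complex \<Rightarrow> nat \<Rightarrow> (G + G) free" where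
  "Rtilde q n =
     (\<Sum>i<n. \<Sum>j<n. \<Sum>m<n. sc (Acoef q n i j m) *
        (rename Inl (gen E ^ m * Kpow genP i) * rename Inr (gen F ^ m * Kpow genP j)))
   + (\<Sum>i<n. \<Sum>j<n. \<Sum>m<n. sc (Acoef q n i j m) *
        (rename Inl (gen E ^ m * Lpow genQ i) * rename Inr (gen F ^ m * Lpow genQ j)))"

end

theory Submission
  imports Defs
begin

(* Write Kt = K + L and Kbt = Kb + Lb.  In U-tilde these are mutually
   inverse, Kt ^ n = 1, and P = K Kb, Q = L Lb are complementary central idempotents with
   K^i = P Kt^i and L^i = Q Kt^i (using K^0 := P, L^0 := Q).  Moving the Cartan factors of
   every summand of R-tilde to the front therefore factors it, as in the paper, as
     R-tilde = e * H * X,   e = P(x)P + Q(x)Q,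
     H = sum_j pi_j (x) Kt^j,   X = sum_m a_m E^m (x) F^m,
   where pi_j are the spectral projections of Kt (built from the n-th roots of unity q^(2j)).
   Then:
   (1) e is a central idempotent of U-tilde (x) U-tilde;
   (2) H and X intertwine Delta and Delta^cop on the generators E and F in two halves
       (H turns Delta^cop(E) into a middle form which X turns into Delta(E)), while Kt (x) Kt,
       hence K, Kb, L, Lb, commutes with H and X; by multiplicativity this gives the
       intertwining property for every b;
   (3) H is invertible (orthogonality of the pi_j) and X is invertible (X = 1 + nilpotent,
       since E^n = 0), so R-dagger = X^(-1) H^(-1) e is the required generalized inverse. *)

lemma sc_0[simp]: "sc 0 = 0" by (simp add: sc_def)
lemma sc_1[simp]: "sc 1 = 1" by (simp add: sc_def)
lemma sc_add: "sc (a + b) = sc a + sc b" by (simp add: sc_def single_add)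
lemma sc_mult: "sc (a * b) = sc a * sc b" by (simp add: sc_def mult_single)

lemma poly_mapping_expansion: "p = (\<Sum>w\<in>Poly_Mapping.keys p. Poly_Mapping.single w (Poly_Mapping.lookup p w))"
proof -
  have *: "finite I
        \<Longrightarrow> Poly_Mapping.lookup (\<Sum>i\<in>I. Poly_Mapping.single i (Poly_Mapping.lookup p i)) j =
            (if j \<in> I then Poly_Mapping.lookup p j else 0)" for I j
    by (induction I rule: finite_induct) (auto simp: lookup_single lookup_add when_def)
  show ?thesis
    by (rule poly_mapping_eqI) (fastforce simp add: in_keys_iff *)
qed

lemma sc_single_comm: "sc c * Poly_Mapping.single w d = Poly_Mapping.single w d * sc c"
  by (simp add: sc_def mult_single mult.commute)

lemma sc_comm: "sc c * x = x * sc c"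
proof -
  have "sc c * x = sc c * (\<Sum>w\<in>Poly_Mapping.keys x. Poly_Mapping.single w (Poly_Mapping.lookup x w))"
    by (subst poly_mapping_expansion[of x]) simp
  also have "\<dots> = (\<Sum>w\<in>Poly_Mapping.keys x. Poly_Mapping.single w (Poly_Mapping.lookup x w)) * sc c"
    by (simp add: sum_distrib_left sum_distrib_right sc_single_comm)
  also have "\<dots> = x * sc c" by (subst (2) poly_mapping_expansion[of x]) simp
  finally show ?thesis .
qed

definition word_eval :: "('g \<Rightarrow> 'h free) \<Rightarrow> 'g word \<Rightarrow> 'h free" where
  "word_eval \<phi> w = (case w of Word u \<Rightarrow> word_hom \<phi> u)"

lemma word_hom_append: "word_hom \<phi> (u @ v) = word_hom \<phi> u * word_hom \<phi> v"
  by (induction u) (simp_all add: mult.assoc)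

lemma word_eval_add: "word_eval \<phi> (a + b) = word_eval \<phi> a * word_eval \<phi> b"
  by (cases a; cases b) (simp add: word_eval_def word_hom_append)

lemma ext_hom_word_eval: "ext_hom \<phi> p = (\<Sum>w\<in>Poly_Mapping.keys p. sc (Poly_Mapping.lookup p w) * word_eval \<phi> w)"
  by (simp add: ext_hom_def word_eval_def)

lemma ext_hom_superset:
  assumes "finite A" "Poly_Mapping.keys p \<subseteq> A"
  shows "ext_hom \<phi> p = (\<Sum>w\<in>A. sc (Poly_Mapping.lookup p w) * word_eval \<phi> w)"
  unfolding ext_hom_word_eval
  by (rule sum.mono_neutral_left) (use assms in \<open>auto simp: in_keys_iff\<close>)

lemma ext_hom_add: "ext_hom \<phi> (p + r) = ext_hom \<phi> p + ext_hom \<phi> r"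
proof -
  let ?A = "Poly_Mapping.keys p \<union> Poly_Mapping.keys r"
  have f: "finite ?A" by simp
  have "ext_hom \<phi> (p + r) = (\<Sum>w\<in>?A. sc (Poly_Mapping.lookup (p+r) w) * word_eval \<phi> w)"
    by (rule ext_hom_superset[OF f]) (simp add: keys_add)
  also have "\<dots> = (\<Sum>w\<in>?A. sc (Poly_Mapping.lookup p w) * word_eval \<phi> w) + (\<Sum>w\<in>?A. sc (Poly_Mapping.lookup r w) * word_eval \<phi> w)"
    by (simp add: lookup_add sc_add distrib_right sum.distrib)
  also have "\<dots> = ext_hom \<phi> p + ext_hom \<phi> r"
    by (simp add: ext_hom_superset[OF f])
  finally show ?thesis .
qed

lemma ext_hom_0[simp]: "ext_hom \<phi> 0 = 0" by (simp add: ext_hom_def)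

lemma ext_hom_sum: "ext_hom \<phi> (sum g A) = (\<Sum>a\<in>A. ext_hom \<phi> (g a))"
  by (induction A rule: infinite_finite_induct) (simp_all add: ext_hom_add)

lemma ext_hom_uminus: "ext_hom \<phi> (- p) = - ext_hom \<phi> p"
  using ext_hom_add[of \<phi> p "-p"] by (simp add: neg_eq_iff_add_eq_0[symmetric])

lemma ext_hom_diff: "ext_hom \<phi> (p - r) = ext_hom \<phi> p - ext_hom \<phi> r"
  using ext_hom_add[of \<phi> p "-r"] by (simp add: ext_hom_uminus)

lemma ext_hom_single: "ext_hom \<phi> (Poly_Mapping.single w c) = sc c * word_eval \<phi> w"
  by (cases "c = 0") (simp_all add: ext_hom_word_eval)

lemma ext_hom_mult: "ext_hom \<phi> (p * r) = ext_hom \<phi> p * ext_hom \<phi> r"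
proof -
  let ?A = "Poly_Mapping.keys p" and ?B = "Poly_Mapping.keys r"
  have "p * r = (\<Sum>a\<in>?A. Poly_Mapping.single a (Poly_Mapping.lookup p a)) *
                (\<Sum>b\<in>?B. Poly_Mapping.single b (Poly_Mapping.lookup r b))"
    by (subst poly_mapping_expansion[of p], subst poly_mapping_expansion[of r]) simp
  also have "\<dots> = (\<Sum>a\<in>?A. \<Sum>b\<in>?B. Poly_Mapping.single (a+b) (Poly_Mapping.lookup p a * Poly_Mapping.lookup r b))"
    by (simp add: sum_distrib_left sum_distrib_right mult_single sum.swap[where A="Poly_Mapping.keys r"])
  finally have "ext_hom \<phi> (p * r) = (\<Sum>a\<in>?A. \<Sum>b\<in>?B. sc (Poly_Mapping.lookup p a * Poly_Mapping.lookup r b) * word_eval \<phi> (a+b))"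
    by (simp add: ext_hom_sum ext_hom_single)
  also have "\<dots> = (\<Sum>a\<in>?A. \<Sum>b\<in>?B. (sc (Poly_Mapping.lookup p a) * word_eval \<phi> a) * (sc (Poly_Mapping.lookup r b) * word_eval \<phi> b))"
    by (simp add: sc_mult word_eval_add mult.assoc sc_comm[of "Poly_Mapping.lookup r _"])
  also have "\<dots> = ext_hom \<phi> p * ext_hom \<phi> r"
    by (simp add: ext_hom_word_eval sum_distrib_left sum_distrib_right sum.swap[where A="Poly_Mapping.keys r"])
  finally show ?thesis .
qed

lemma ext_hom_sc[simp]: "ext_hom \<phi> (sc c) = sc c"
  by (simp add: sc_def ext_hom_single word_eval_def zero_word_def)

lemma ext_hom_1[simp]: "ext_hom \<phi> 1 = 1"
  using ext_hom_sc[of \<phi> 1] by simp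

lemma ext_hom_gen[simp]: "ext_hom \<phi> (gen x) = \<phi> x"
  by (simp add: gen_def ext_hom_single word_eval_def)

lemma ext_hom_power: "ext_hom \<phi> (p ^ m) = ext_hom \<phi> p ^ m"
  by (induction m) (simp_all add: ext_hom_mult)

lemma rename_gen[simp]: "rename f (gen x) = gen (f x)" by (simp add: rename_def)
lemma rename_sc[simp]: "rename f (sc c) = sc c" by (simp add: rename_def)
lemma rename_1[simp]: "rename f 1 = 1" by (simp add: rename_def)
lemma rename_0[simp]: "rename f 0 = 0" by (simp add: rename_def)
lemma rename_add[simp]: "rename f (a + b) = rename f a + rename f b" by (simp add: rename_def ext_hom_add)
lemma rename_mult[simp]: "rename f (a * b) = rename f a * rename f b" by (simp add: rename_def ext_hom_mult)
lemma rename_diff[simp]: "rename f (a - b) = rename f a - rename f b" by (simp add: rename_def ext_hom_diff)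
lemma rename_uminus[simp]: "rename f (- b) = - rename f b" by (simp add: rename_def ext_hom_uminus)
lemma rename_power[simp]: "rename f (a ^ m) = rename f a ^ m" by (simp add: rename_def ext_hom_power)
lemma rename_sum[simp]: "rename f (sum g A) = (\<Sum>x\<in>A. rename f (g x))" by (simp add: rename_def ext_hom_sum)

lemma single_word_gen: "Poly_Mapping.single (Word (x # u)) c = gen x * Poly_Mapping.single (Word u) c"
  by (simp add: gen_def mult_single)

lemma free_induct:
  assumes sc: "\<And>c. P (sc c)" and g: "\<And>x. P (gen x)"
    and add: "\<And>a b. P a \<Longrightarrow> P b \<Longrightarrow> P (a + b)"
    and mult: "\<And>a b. P a \<Longrightarrow> P b \<Longrightarrow> P (a * b)"
  shows "P y"
proof -
  have s: "P (Poly_Mapping.single (Word u) c)" for u c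
  proof (induction u)
    case Nil
    then show ?case using sc[of c] by (simp add: sc_def zero_word_def)
  next
    case (Cons x u)
    then show ?case by (simp add: single_word_gen mult g)
  qed
  have "P (\<Sum>w\<in>A. Poly_Mapping.single w (Poly_Mapping.lookup y w))" if "finite A" for A
    using that
  proof (induction A rule: finite_induct)
    case empty
    then show ?case using sc[of 0] by simp
  next
    case (insert w A)
    then show ?case by (cases w) (simp add: add s)
  qed
  then show ?thesis by (subst poly_mapping_expansion) simp
qed

lemma ideal_gen_neg: "x \<in> ideal_gen S \<Longrightarrow> - x \<in> ideal_gen S"
  using ideal_gen.mult[of x S "-1" 1] by simp
lemma ideal_gen_diff: "x \<in> ideal_gen S \<Longrightarrow> y \<in> ideal_gen S \<Longrightarrow> x - y \<in> ideal_gen S"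
  using ideal_gen.add[OF _ ideal_gen_neg] by (metis diff_conv_add_uminus)
lemma ideal_gen_lmult: "x \<in> ideal_gen S \<Longrightarrow> a * x \<in> ideal_gen S"
  using ideal_gen.mult[of x S a 1] by simp
lemma ideal_gen_rmult: "x \<in> ideal_gen S \<Longrightarrow> x * b \<in> ideal_gen S"
  using ideal_gen.mult[of x S 1 b] by simp
lemma ideal_gen_sum: "(\<And>i. i \<in> A \<Longrightarrow> g i \<in> ideal_gen S) \<Longrightarrow> sum g A \<in> ideal_gen S"
  by (induction A rule: infinite_finite_induct) (auto intro: ideal_gen.zero ideal_gen.add)
lemma ideal_gen_mono: "x \<in> ideal_gen S \<Longrightarrow> S \<subseteq> S' \<Longrightarrow> x \<in> ideal_gen S'"
  by (induction rule: ideal_gen.induct) (auto intro: ideal_gen.intros)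
lemma ideal_gen_rename: "x \<in> ideal_gen S \<Longrightarrow> rename f x \<in> ideal_gen (rename f ` S)"
  by (induction rule: ideal_gen.induct) (auto intro: ideal_gen.intros)

lemma cm_refl[simp, intro]: "cong_mod S x x" by (simp add: cong_mod_def ideal_gen.zero)
lemma cm_sym: "cong_mod S x y \<Longrightarrow> cong_mod S y x"
  unfolding cong_mod_def using ideal_gen_neg by fastforce
lemma cm_trans[trans]: "cong_mod S x y \<Longrightarrow> cong_mod S y z \<Longrightarrow> cong_mod S x z"
  unfolding cong_mod_def using ideal_gen.add by fastforce
lemma cm_add: "cong_mod S a b \<Longrightarrow> cong_mod S c d \<Longrightarrow> cong_mod S (a + c) (b + d)"
  unfolding cong_mod_def using ideal_gen.add by (fastforce simp: algebra_simps)
lemma cm_diff: "cong_mod S a b \<Longrightarrow> cong_mod S c d \<Longrightarrow> cong_mod S (a - c) (b - d)"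
  unfolding cong_mod_def using ideal_gen_diff by (fastforce simp: algebra_simps)
lemma cm_mult: "cong_mod S a b \<Longrightarrow> cong_mod S c d \<Longrightarrow> cong_mod S (a * c) (b * d)"
proof -
  assume "cong_mod S a b" "cong_mod S c d"
  then have "(a - b) * c \<in> ideal_gen S" "b * (c - d) \<in> ideal_gen S"
    by (auto simp: cong_mod_def intro: ideal_gen_lmult ideal_gen_rmult)
  then have "(a - b) * c + b * (c - d) \<in> ideal_gen S" by (rule ideal_gen.add)
  then show ?thesis by (simp add: cong_mod_def algebra_simps)
qed
lemma cm_multL: "cong_mod S c d \<Longrightarrow> cong_mod S (a * c) (a * d)" by (rule cm_mult) auto
lemma cm_multR: "cong_mod S a b \<Longrightarrow> cong_mod S (a * c) (b * c)" by (rule cm_mult) auto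
lemma cm_sum: "(\<And>i. i \<in> A \<Longrightarrow> cong_mod S (f i) (g i)) \<Longrightarrow> cong_mod S (sum f A) (sum g A)"
  unfolding cong_mod_def by (simp add: sum_subtractf[symmetric] ideal_gen_sum)
lemma cm_power: "cong_mod S a b \<Longrightarrow> cong_mod S (a ^ m) (b ^ m)"
  by (induction m) (auto intro: cm_mult)
lemma cm_base: "x \<in> S \<Longrightarrow> cong_mod S x 0"
  by (simp add: cong_mod_def ideal_gen.base)
lemma cm_base_eq: "x - y \<in> S \<Longrightarrow> cong_mod S x y"
  by (simp add: cong_mod_def ideal_gen.base)
lemma cm_rename: "cong_mod S x y \<Longrightarrow> cong_mod (rename f ` S) (rename f x) (rename f y)"
  unfolding cong_mod_def using ideal_gen_rename by fastforce
lemma cm_mono: "S \<subseteq> S' \<Longrightarrow> cong_mod S x y \<Longrightarrow> cong_mod S' x y"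
  unfolding cong_mod_def using ideal_gen_mono by metis
lemma cm_diff_swap: "cong_mod S (a - b) (c - d) \<Longrightarrow> cong_mod S (d + a) (b + c)"
  unfolding cong_mod_def by (simp add: algebra_simps)

lemma cm_lift_left: "cong_mod (rels_Ut q n) x y \<Longrightarrow> cong_mod (rels_tensor q n) (rename Inl x) (rename Inl y)"
  by (rule cm_mono[OF _ cm_rename]) (auto simp: rels_tensor_def)
lemma cm_lift_right: "cong_mod (rels_Ut q n) x y \<Longrightarrow> cong_mod (rels_tensor q n) (rename Inr x) (rename Inr y)"
  by (rule cm_mono[OF _ cm_rename]) (auto simp: rels_tensor_def)

lemma gen_legs_commute: "cong_mod (rels_tensor q n) (gen (Inl a) * gen (Inr b)) (gen (Inr b) * gen (Inl a))"
  by (rule cm_base_eq) (auto simp: rels_tensor_def)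

lemma commutes_with_rename:
  assumes "\<And>x. cong_mod S (z * gen (f x)) (gen (f x) * z)"
  shows "cong_mod S (z * rename f y) (rename f y * z)"
proof (induction y rule: free_induct)
  case (1 c) then show ?case by (simp add: sc_comm)
next
  case (2 x) then show ?case by (simp add: assms)
next
  case (3 a b) then show ?case by (simp add: distrib_left distrib_right cm_add)
next
  case (4 a b)
  have "z * rename f (a * b) = (z * rename f a) * rename f b" by (simp add: mult.assoc)
  also have "cong_mod S \<dots> ((rename f a * z) * rename f b)" by (rule cm_multR[OF 4(1)])
  also have "\<dots> = rename f a * (z * rename f b)" by (simp add: mult.assoc)
  also have "cong_mod S \<dots> (rename f a * (rename f b * z))" by (rule cm_multL[OF 4(2)])
  finally show ?case by (simp add: mult.assoc)
qed

lemma rename_id: "rename (\<lambda>x. x) y = y"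
  by (induction y rule: free_induct) simp_all

lemma comm_closed:
  assumes "\<And>x. cong_mod S (z * gen x) (gen x * z)"
  shows "cong_mod S (z * y) (y * z)"
  using commutes_with_rename[of S z "\<lambda>x. x" y] assms by (simp add: rename_id)

lemma legs_commute: "cong_mod (rels_tensor q n) (rename Inl x * rename Inr y) (rename Inr y * rename Inl x)"
proof (rule commutes_with_rename)
  fix b
  have "cong_mod (rels_tensor q n) (gen (Inr b) * rename Inl x) (rename Inl x * gen (Inr b))"
    by (rule commutes_with_rename) (rule cm_sym[OF gen_legs_commute])
  then show "cong_mod (rels_tensor q n) (rename Inl x * gen (Inr b)) (gen (Inr b) * rename Inl x)"
    by (rule cm_sym)
qed

lemma sc_pull: "a * (sc c * b) = sc c * (a * b)"
  by (metis mult.assoc sc_comm)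

definition smul :: "complex \<Rightarrow> 'g free \<Rightarrow> 'g free" where "smul c x = sc c * x"

lemma smul_left: "smul c a * b = smul c (a * b)" by (simp add: smul_def mult.assoc)
lemma smul_right: "a * smul c b = smul c (a * b)" unfolding smul_def by (rule sc_pull)
lemma smul_smul: "smul c (smul d a) = smul (c * d) a" by (simp add: smul_def sc_mult mult.assoc)
lemma sc_times: "sc c * a = smul c a" by (simp add: smul_def)
lemma times_sc: "a * sc c = smul c a" unfolding smul_def by (rule sc_comm[symmetric])
lemma smul_sc: "smul c (sc d) = sc (c * d)" by (simp add: smul_def sc_mult)
lemma smul_1: "smul 1 a = a" by (simp add: smul_def)
lemma smul_0: "smul 0 a = 0" by (simp add: smul_def)
lemma smul_zero: "smul c 0 = 0" by (simp add: smul_def)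
lemma smul_add: "smul c (a + b) = smul c a + smul c b" by (simp add: smul_def algebra_simps)
lemma smul_diff: "smul c (a - b) = smul c a - smul c b" by (simp add: smul_def algebra_simps)
lemma add_smul: "smul (c + d) a = smul c a + smul d a" by (simp add: smul_def sc_add algebra_simps)
lemma smul_sum: "smul c (sum g A) = (\<Sum>x\<in>A. smul c (g x))" by (simp add: smul_def sum_distrib_left)
lemma sum_smul: "smul (sum g A) a = (\<Sum>x\<in>A. smul (g x) a)"
  by (induction A rule: infinite_finite_induct) (simp_all add: add_smul smul_0)
lemma rename_smul: "rename f (smul c x) = smul c (rename f x)" by (simp add: smul_def)
lemma cm_smul: "cong_mod S x y \<Longrightarrow> cong_mod S (smul c x) (smul c y)" unfolding smul_def by (rule cm_multL)
declare smul_left[simp] smul_right[simp] smul_smul[simp] sc_times[simp] times_sc[simp] smul_sc[simp]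
  smul_1[simp] smul_0[simp] smul_zero[simp] rename_smul[simp]

lemma qcomm_1:
  assumes "cong_mod S (a * b) (smul c (b * a))"
  shows "cong_mod S (a * b ^ m) (smul (c ^ m) (b ^ m * a))"
proof (induction m)
  case 0 then show ?case by simp
next
  case (Suc m)
  have "a * b ^ Suc m = (a * b ^ m) * b" by (simp add: power_Suc2 mult.assoc del: power_Suc)
  also have "cong_mod S \<dots> (smul (c ^ m) (b ^ m * a) * b)" by (rule cm_multR[OF Suc.IH])
  also have "\<dots> = smul (c ^ m) (b ^ m * (a * b))" by (simp add: mult.assoc)
  also have "cong_mod S \<dots> (smul (c ^ m) (b ^ m * smul c (b * a)))" by (intro cm_smul cm_multL assms)
  also have "\<dots> = smul (c ^ Suc m) (b ^ Suc m * a)" by (simp add: mult.assoc power_Suc2 mult.commute del: power_Suc)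
  finally show ?case .
qed

lemma qcomm_pow:
  assumes "cong_mod S (a * b) (smul c (b * a))"
  shows "cong_mod S (a ^ i * b ^ m) (smul (c ^ (i * m)) (b ^ m * a ^ i))"
proof (induction i)
  case 0 then show ?case by simp
next
  case (Suc i)
  have "a ^ Suc i * b ^ m = a * (a ^ i * b ^ m)" by (simp add: mult.assoc)
  also have "cong_mod S \<dots> (a * smul (c ^ (i * m)) (b ^ m * a ^ i))" by (rule cm_multL[OF Suc.IH])
  also have "\<dots> = smul (c ^ (i * m)) ((a * b ^ m) * a ^ i)" by (simp add: mult.assoc)
  also have "cong_mod S \<dots> (smul (c ^ (i * m)) (smul (c ^ m) (b ^ m * a) * a ^ i))"
    by (intro cm_smul cm_multR qcomm_1 assms)
  also have "\<dots> = smul (c ^ (Suc i * m)) (b ^ m * a ^ Suc i)" by (simp add: mult.assoc power_add mult.commute)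
  finally show ?case .
qed

lemma geometric_telescope: "(1 - x) * (\<Sum>k<m. x ^ k) = (1::'a::ring_1) - x ^ m"
proof (induction m)
  case 0 then show ?case by simp
next
  case (Suc m)
  have "(1 - x) * (\<Sum>k<Suc m. x ^ k) = (1 - x) * (\<Sum>k<m. x ^ k) + (1 - x) * x ^ m"
    by (simp add: distrib_left)
  also have "\<dots> = (1 - x ^ m) + (x ^ m - x ^ Suc m)" by (simp only: Suc.IH) (simp add: algebra_simps)
  finally show ?case by simp
qed

lemma power_mult_commuting: "a * b = b * (a::'a::ring_1) \<Longrightarrow> (a * b) ^ m = a ^ m * b ^ m"
proof (induction m)
  case 0 then show ?case by simp
next
  case (Suc m)
  have IH: "(a * b) ^ m = a ^ m * b ^ m" using Suc by blast
  have comm: "b * a ^ m = a ^ m * b" by (rule power_commuting_commutes[symmetric]) (use Suc.prems in simp)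
  have "(a * b) ^ Suc m = a * (b * a ^ m) * b ^ m" by (simp only: power_Suc IH mult.assoc)
  also have "\<dots> = a ^ Suc m * b ^ Suc m" by (simp only: comm power_Suc mult.assoc)
  finally show ?case .
qed

lemma sum_shift1:
  assumes "cong_mod S (g N) (g 0)"
  shows "cong_mod S (\<Sum>i<N. g (Suc i)) (\<Sum>i<N. g i)"
proof -
  have "(\<Sum>i<N. g (Suc i)) = (\<Sum>i<N. g i) + g N - g 0"
    using sum.lessThan_Suc_shift[of g N] sum.lessThan_Suc[of g N] by (simp add: algebra_simps)
  also have "cong_mod S \<dots> ((\<Sum>i<N. g i) + g 0 - g 0)" by (intro cm_diff cm_add assms cm_refl)
  finally show ?thesis by simp
qed

lemma sum_shift_periodic:
  fixes N c :: nat
  assumes "\<And>j. cong_mod S (g (j + N)) (g j)"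
  shows "cong_mod S (\<Sum>j<N. g (j + c)) (\<Sum>j<N. g j)"
proof (induction c)
  case 0 then show ?case by simp
next
  case (Suc c)
  have "(\<Sum>j<N. g (j + Suc c)) = (\<Sum>j<N. (\<lambda>j. g (j + c)) (Suc j))" by simp
  also have "cong_mod S \<dots> (\<Sum>j<N. g (j + c))"
    by (rule sum_shift1) (use assms[of c] in \<open>simp add: add.commute\<close>)
  also have "cong_mod S \<dots> (\<Sum>j<N. g j)" by (rule Suc.IH)
  finally show ?case .
qed

lemma sum_split_shift:
  fixes N :: nat
  assumes h0: "cong_mod S (h 0) 0" and hs: "\<And>m. m < N \<Longrightarrow> cong_mod S (h (Suc m)) (k m)"
    and kN: "cong_mod S (k N) 0"
  shows "cong_mod S (\<Sum>m<Suc N. h m) (\<Sum>m<Suc N. k m)"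
proof -
  have "(\<Sum>m<Suc N. h m) = (\<Sum>m<N. h (Suc m)) + h 0" by (simp only: sum.lessThan_Suc_shift add.commute)
  also have "cong_mod S \<dots> ((\<Sum>m<N. k m) + 0)" by (intro cm_add cm_sum hs h0) auto
  also have "cong_mod S \<dots> ((\<Sum>m<N. k m) + k N)" by (intro cm_add cm_refl cm_sym[OF kN])
  also have "(\<Sum>m<N. k m) + k N = (\<Sum>m<Suc N. k m)" by simp
  finally show ?thesis .
qed

lemma pow_mod_n: "(x::'a::monoid_mult) ^ N = 1 \<Longrightarrow> x ^ a = x ^ (a mod N)"
proof -
  assume h: "x ^ N = 1"
  have "x ^ a = x ^ (N * (a div N) + a mod N)" by (metis mult.commute div_mult_mod_eq)
  also have "\<dots> = x ^ (a mod N)" by (simp only: power_add power_mult h power_one mult_1)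
  finally show ?thesis .
qed

lemma char_sum: "(x::'a::field) ^ N = 1 \<Longrightarrow> (\<Sum>k<N. x ^ k) = (if x = 1 then of_nat N else 0)"
  by (auto simp: geometric_sum)

definition tensor :: "G free \<Rightarrow> G free \<Rightarrow> (G + G) free" where
  "tensor a b = rename Inl a * rename Inr b"

lemma tensor_add1: "tensor (a + b) c = tensor a c + tensor b c" by (simp add: tensor_def algebra_simps)
lemma tensor_add2: "tensor a (b + c) = tensor a b + tensor a c" by (simp add: tensor_def algebra_simps)
lemma tensor_diff1: "tensor (a - b) c = tensor a c - tensor b c" by (simp add: tensor_def algebra_simps)
lemma tensor_diff2: "tensor a (b - c) = tensor a b - tensor a c" by (simp add: tensor_def algebra_simps)
lemma tensor_smul1: "tensor (smul c a) b = smul c (tensor a b)" by (simp add: tensor_def)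
lemma tensor_smul2: "tensor a (smul c b) = smul c (tensor a b)" by (simp add: tensor_def)
lemma tensor_sum1: "tensor (sum g A) b = (\<Sum>x\<in>A. tensor (g x) b)" by (simp add: tensor_def sum_distrib_right)
lemma tensor_0_1[simp]: "tensor 0 b = 0" by (simp add: tensor_def)
lemma tensor_0_2[simp]: "tensor a 0 = 0" by (simp add: tensor_def)
lemma tensor_1_1[simp]: "tensor 1 1 = 1" by (simp add: tensor_def)

lemma tensor_gl: "gen (Inl x) = tensor (gen x) 1" by (simp add: tensor_def)
lemma tensor_gr: "gen (Inr x) = tensor 1 (gen x)" by (simp add: tensor_def)
lemma gl_tensor: "gl x = tensor (gen x) 1" by (simp add: gl_def tensor_def)
lemma gr_tensor: "gr x = tensor 1 (gen x)" by (simp add: gr_def tensor_def)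
lemma tensor_left_right: "tensor a 1 * tensor 1 b = tensor a b" by (simp add: tensor_def)

lemma Delta_gen_eq: "Delta (gen x) = Delta_gen x" by (simp add: Delta_def)
lemma Dcop_gen_eq: "Delta_cop (gen x) = rename flip (Delta_gen x)" by (simp add: Delta_cop_def Delta_gen_eq)
lemma rename_flip_gl: "rename flip (gl x) = gr x" by (simp add: gl_def gr_def flip_def)
lemma rename_flip_gr: "rename flip (gr x) = gl x" by (simp add: gl_def gr_def flip_def)
lemma Delta_add: "Delta (a + b) = Delta a + Delta b" by (simp add: Delta_def ext_hom_add)
lemma Delta_mult: "Delta (a * b) = Delta a * Delta b" by (simp add: Delta_def ext_hom_mult)
lemma Delta_sc: "Delta (sc c) = sc c" by (simp add: Delta_def)
lemma Dcop_add: "Delta_cop (a + b) = Delta_cop a + Delta_cop b" by (simp add: Delta_cop_def Delta_add)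
lemma Dcop_mult: "Delta_cop (a * b) = Delta_cop a * Delta_cop b" by (simp add: Delta_cop_def Delta_mult)
lemma Dcop_sc: "Delta_cop (sc c) = sc c" by (simp add: Delta_cop_def Delta_sc)

locale Ut_setting =
  fixes q :: complex and n :: nat
begin

abbreviation cong_U (infix "\<sim>" 50) where "x \<sim> y \<equiv> cong_mod (rels_Ut q n) x y"
abbreviation cong_UU (infix "\<approx>" 50) where "x \<approx> y \<equiv> cong_mod (rels_tensor q n) x y"

lemma tensor_mult: "tensor a b * tensor c d \<approx> tensor (a * c) (b * d)"
proof -
  have "tensor a b * tensor c d = rename Inl a * (rename Inr b * rename Inl c) * rename Inr d" by (simp add: tensor_def mult.assoc)
  also have "\<dots> \<approx> rename Inl a * (rename Inl c * rename Inr b) * rename Inr d"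
    by (intro cm_multL cm_multR cm_sym[OF legs_commute])
  also have "\<dots> = tensor (a * c) (b * d)" by (simp add: tensor_def mult.assoc)
  finally show ?thesis .
qed

lemma tensor_cong: "a \<sim> a' \<Longrightarrow> b \<sim> b' \<Longrightarrow> tensor a b \<approx> tensor a' b'"
  unfolding tensor_def by (intro cm_mult cm_lift_left cm_lift_right)

lemma tensor_cong1: "a \<sim> a' \<Longrightarrow> tensor a b \<approx> tensor a' b" by (rule tensor_cong) auto
lemma tensor_cong2: "b \<sim> b' \<Longrightarrow> tensor a b \<approx> tensor a b'" by (rule tensor_cong) auto

lemma tensor_mult_1L: "tensor 1 b * tensor c d \<approx> tensor c (b * d)" using tensor_mult[of 1 b c d] by simp
lemma tensor_mult_1R: "tensor a b * tensor 1 d \<approx> tensor a (b * d)" using tensor_mult[of a b 1 d] by simp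
lemma tensor_mult_L1: "tensor a 1 * tensor c d \<approx> tensor (a * c) d" using tensor_mult[of a 1 c d] by simp
lemma tensor_mult_R1: "tensor a b * tensor c 1 \<approx> tensor (a * c) b" using tensor_mult[of a b c 1] by simp

lemma tensor_split: "a \<sim> p * x \<Longrightarrow> b \<sim> p' * y \<Longrightarrow> tensor a b \<approx> tensor p p' * tensor x y"
  by (rule cm_trans[OF tensor_cong cm_sym[OF tensor_mult]])

lemma tensor_pow: "tensor a b ^ m \<approx> tensor (a ^ m) (b ^ m)"
proof (induction m)
  case 0 then show ?case by simp
next
  case (Suc m)
  have "tensor a b ^ Suc m = tensor a b * tensor a b ^ m" by simp
  also have "\<dots> \<approx> tensor a b * tensor (a ^ m) (b ^ m)" by (rule cm_multL[OF Suc.IH])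
  also have "\<dots> \<approx> tensor (a ^ Suc m) (b ^ Suc m)" using tensor_mult by simp
  finally show ?case .
qed

lemma tensor_central:
  assumes a: "\<And>y. a * y \<sim> y * a" and b: "\<And>y. b * y \<sim> y * b"
  shows "tensor a b * z \<approx> z * tensor a b"
proof (rule comm_closed)
  fix g :: "G + G"
  show "tensor a b * gen g \<approx> gen g * tensor a b"
  proof (cases g)
    case (Inl x)
    have "tensor a b * gen g = tensor a b * tensor (gen x) 1" by (simp add: Inl tensor_gl)
    also have "\<dots> \<approx> tensor (a * gen x) (b * 1)" by (rule tensor_mult)
    also have "\<dots> \<approx> tensor (gen x * a) (1 * b)" by (rule tensor_cong) (use a in auto)
    also have "\<dots> \<approx> tensor (gen x) 1 * tensor a b" by (rule cm_sym[OF tensor_mult])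
    finally show ?thesis by (simp add: Inl tensor_gl)
  next
    case (Inr x)
    have "tensor a b * gen g = tensor a b * tensor 1 (gen x)" by (simp add: Inr tensor_gr)
    also have "\<dots> \<approx> tensor (a * 1) (b * gen x)" by (rule tensor_mult)
    also have "\<dots> \<approx> tensor (1 * a) (gen x * b)" by (rule tensor_cong) (use b in auto)
    also have "\<dots> \<approx> tensor 1 (gen x) * tensor a b" by (rule cm_sym[OF tensor_mult])
    finally show ?thesis by (simp add: Inr tensor_gr)
  qed
qed

definition commutes :: "(G + G) free \<Rightarrow> (G + G) free \<Rightarrow> bool" where
  "commutes z y \<longleftrightarrow> z * y \<approx> y * z"

lemma commutes_mult: "commutes z a \<Longrightarrow> commutes z b \<Longrightarrow> commutes z (a * b)"
proof -
  assume a: "commutes z a" and b: "commutes z b"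
  have "z * (a * b) = (z * a) * b" by (simp add: mult.assoc)
  also have "\<dots> \<approx> (a * z) * b" using a by (intro cm_multR) (simp add: commutes_def)
  also have "\<dots> = a * (z * b)" by (simp add: mult.assoc)
  also have "\<dots> \<approx> a * (b * z)" using b by (intro cm_multL) (simp add: commutes_def)
  finally show ?thesis by (simp add: commutes_def mult.assoc)
qed
lemma commutes_add: "commutes z a \<Longrightarrow> commutes z b \<Longrightarrow> commutes z (a + b)"
  by (simp add: commutes_def distrib_left distrib_right cm_add)
lemma commutes_smul: "commutes z a \<Longrightarrow> commutes z (smul c a)"
  by (simp add: commutes_def cm_smul)
lemma commutes_sum: "(\<And>i. i \<in> A \<Longrightarrow> commutes z (g i)) \<Longrightarrow> commutes z (sum g A)"
  by (induction A rule: infinite_finite_induct) (auto simp: commutes_def intro: commutes_add[unfolded commutes_def])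
lemma commutes_power: "commutes z a \<Longrightarrow> commutes z (a ^ m)"
proof (induction m)
  case 0 then show ?case by (simp add: commutes_def)
next
  case (Suc m) show ?case unfolding power_Suc by (rule commutes_mult[OF Suc.prems Suc.IH[OF Suc.prems]])
qed
lemma commutes_sym: "commutes z a \<Longrightarrow> commutes a z"
  by (simp add: commutes_def cm_sym)
lemma commutes_cong: "commutes z a \<Longrightarrow> a \<approx> a' \<Longrightarrow> commutes z a'"
proof -
  assume h: "commutes z a" "a \<approx> a'"
  have "z * a' \<approx> z * a" by (rule cm_multL[OF cm_sym[OF h(2)]])
  also have "\<dots> \<approx> a * z" using h(1) by (simp add: commutes_def)
  also have "\<dots> \<approx> a' * z" by (rule cm_multR[OF h(2)])
  finally show ?thesis by (simp add: commutes_def)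
qed
lemma commutes_mult1: "commutes a z \<Longrightarrow> commutes b z \<Longrightarrow> commutes (a * b) z"
  using commutes_mult commutes_sym by blast

lemma central_commutes: "(\<And>z. c * z \<approx> z * c) \<Longrightarrow> commutes c y"
  by (simp add: commutes_def)

lemma tensor_commutes_scaled:
  assumes "z1 * a \<sim> smul c (a * z1)" "z2 * b \<sim> smul c' (b * z2)" "c * c' = 1"
  shows "commutes (tensor z1 z2) (tensor a b)"
proof -
  have "tensor z1 z2 * tensor a b \<approx> tensor (z1 * a) (z2 * b)" by (rule tensor_mult)
  also have "\<dots> \<approx> tensor (smul c (a * z1)) (smul c' (b * z2))" by (intro tensor_cong assms)
  also have "\<dots> = tensor (a * z1) (b * z2)" using assms(3) by (simp add: tensor_smul1 tensor_smul2 mult.commute)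
  also have "\<dots> \<approx> tensor a b * tensor z1 z2" by (rule cm_sym[OF tensor_mult])
  finally show ?thesis by (simp add: commutes_def)
qed

lemma tensor_commutes: "z1 * a = a * z1 \<Longrightarrow> z2 * b = b * z2 \<Longrightarrow> commutes (tensor z1 z2) (tensor a b)"
  by (rule tensor_commutes_scaled[where c=1 and c'=1]) auto

end

context Ut_setting
begin

lemma relation: "x - y \<in> rels_Ut q n \<Longrightarrow> x \<sim> y" by (rule cm_base_eq)

lemma K_Kb_K: "gen K * gen Kb * gen K \<sim> gen K" by (rule relation) (simp add: rels_Ut_def rels_U_def Let_def)
lemma Kb_K_Kb: "gen Kb * gen K * gen Kb \<sim> gen Kb" by (rule relation) (simp add: rels_Ut_def rels_U_def Let_def)
lemma K_Kb_comm: "gen K * gen Kb \<sim> gen Kb * gen K" by (rule relation) (simp add: rels_Ut_def rels_U_def Let_def)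
lemma L_Lb_L: "gen L * gen Lb * gen L \<sim> gen L" by (rule relation) (simp add: rels_Ut_def rels_U_def Let_def)
lemma Lb_L_Lb: "gen Lb * gen L * gen Lb \<sim> gen Lb" by (rule relation) (simp add: rels_Ut_def rels_U_def Let_def)
lemma L_Lb_comm: "gen L * gen Lb \<sim> gen Lb * gen L" by (rule relation) (simp add: rels_Ut_def rels_U_def Let_def)
lemma KKb_plus_LLb: "gen K * gen Kb + gen L * gen Lb \<sim> 1" by (rule relation) (simp add: rels_Ut_def rels_U_def Let_def)
lemma K_E: "gen K * gen E \<sim> smul (q^2) (gen E * gen K)" by (rule relation) (simp add: rels_Ut_def rels_U_def Let_def)
lemma L_E: "gen L * gen E \<sim> smul (q^2) (gen E * gen L)" by (rule relation) (simp add: rels_Ut_def rels_U_def Let_def)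
lemma Kb_E: "gen Kb * gen E \<sim> smul (inverse q ^ 2) (gen E * gen Kb)" by (rule relation) (simp add: rels_Ut_def rels_U_def Let_def)
lemma Lb_E: "gen Lb * gen E \<sim> smul (inverse q ^ 2) (gen E * gen Lb)" by (rule relation) (simp add: rels_Ut_def rels_U_def Let_def)
lemma K_F: "gen K * gen F \<sim> smul (inverse q ^ 2) (gen F * gen K)" by (rule relation) (simp add: rels_Ut_def rels_U_def Let_def)
lemma L_F: "gen L * gen F \<sim> smul (inverse q ^ 2) (gen F * gen L)" by (rule relation) (simp add: rels_Ut_def rels_U_def Let_def)
lemma Kb_F: "gen Kb * gen F \<sim> smul (q^2) (gen F * gen Kb)" by (rule relation) (simp add: rels_Ut_def rels_U_def Let_def)
lemma Lb_F: "gen Lb * gen F \<sim> smul (q^2) (gen F * gen Lb)" by (rule relation) (simp add: rels_Ut_def rels_U_def Let_def)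
lemma E_F_commutator: "gen E * gen F - gen F * gen E \<sim> smul (inverse (q - inverse q)) ((gen K + gen L) - (gen Kb + gen Lb))"
  by (rule relation) (simp add: rels_Ut_def rels_U_def Let_def)
lemma K_pow_n: "gen K ^ n \<sim> gen K * gen Kb" by (rule relation) (simp add: rels_Ut_def genP_def)
lemma L_pow_n: "gen L ^ n \<sim> gen L * gen Lb" by (rule relation) (simp add: rels_Ut_def genQ_def)
lemma E_pow_n: "gen E ^ n \<sim> 0" by (rule cm_base) (simp add: rels_Ut_def)
lemma F_pow_n: "gen F ^ n \<sim> 0" by (rule cm_base) (simp add: rels_Ut_def)

lemma P_idem: "genP * genP \<sim> genP"
proof -
  have "genP * genP = (gen K * gen Kb * gen K) * gen Kb" by (simp add: genP_def mult.assoc)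
  also have "\<dots> \<sim> gen K * gen Kb" by (rule cm_multR[OF K_Kb_K])
  finally show ?thesis by (simp add: genP_def)
qed
lemma Q_idem: "genQ * genQ \<sim> genQ"
proof -
  have "genQ * genQ = (gen L * gen Lb * gen L) * gen Lb" by (simp add: genQ_def mult.assoc)
  also have "\<dots> \<sim> gen L * gen Lb" by (rule cm_multR[OF L_Lb_L])
  finally show ?thesis by (simp add: genQ_def)
qed
lemma P_plus_Q: "genP + genQ \<sim> 1" using KKb_plus_LLb by (simp add: genP_def genQ_def)
lemma Q_eq_compl: "genQ \<sim> 1 - genP"
proof -
  have "genQ = (genP + genQ) - genP" by simp
  also have "\<dots> \<sim> 1 - genP" by (rule cm_diff[OF P_plus_Q]) simp
  finally show ?thesis .
qed
lemma P_Q_orth: "genP * genQ \<sim> 0"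
proof -
  have "genP * genQ \<sim> genP * (1 - genP)" by (rule cm_multL[OF Q_eq_compl])
  also have "genP * (1 - genP) = genP - genP * genP" by (simp add: algebra_simps)
  also have "\<dots> \<sim> genP - genP" by (rule cm_diff[OF _ P_idem]) simp
  finally show ?thesis by simp
qed
lemma Q_P_orth: "genQ * genP \<sim> 0"
proof -
  have "genQ * genP \<sim> (1 - genP) * genP" by (rule cm_multR[OF Q_eq_compl])
  also have "(1 - genP) * genP = genP - genP * genP" by (simp add: algebra_simps)
  also have "\<dots> \<sim> genP - genP" by (rule cm_diff[OF _ P_idem]) simp
  finally show ?thesis by simp
qed

lemma PK: "genP * gen K \<sim> gen K" using K_Kb_K by (simp add: genP_def)
lemma KP: "gen K * genP \<sim> gen K"
proof -
  have "gen K * genP = gen K * (gen K * gen Kb)" by (simp add: genP_def)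
  also have "\<dots> \<sim> gen K * (gen Kb * gen K)" by (rule cm_multL[OF K_Kb_comm])
  also have "\<dots> = gen K * gen Kb * gen K" by (simp add: mult.assoc)
  also have "\<dots> \<sim> gen K" by (rule K_Kb_K)
  finally show ?thesis .
qed
lemma KbP: "gen Kb * genP \<sim> gen Kb"
  using Kb_K_Kb by (simp add: genP_def mult.assoc)
lemma PKb: "genP * gen Kb \<sim> gen Kb"
proof -
  have "genP * gen Kb \<sim> (gen Kb * gen K) * gen Kb" unfolding genP_def by (rule cm_multR[OF K_Kb_comm])
  also have "\<dots> \<sim> gen Kb" by (rule Kb_K_Kb)
  finally show ?thesis .
qed
lemma QL: "genQ * gen L \<sim> gen L" using L_Lb_L by (simp add: genQ_def)
lemma LQ: "gen L * genQ \<sim> gen L"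
proof -
  have "gen L * genQ = gen L * (gen L * gen Lb)" by (simp add: genQ_def)
  also have "\<dots> \<sim> gen L * (gen Lb * gen L)" by (rule cm_multL[OF L_Lb_comm])
  also have "\<dots> = gen L * gen Lb * gen L" by (simp add: mult.assoc)
  also have "\<dots> \<sim> gen L" by (rule L_Lb_L)
  finally show ?thesis .
qed
lemma LbQ: "gen Lb * genQ \<sim> gen Lb"
proof -
  have "gen Lb * genQ = gen Lb * gen L * gen Lb" by (simp add: genQ_def mult.assoc)
  also have "\<dots> \<sim> gen Lb" by (rule Lb_L_Lb)
  finally show ?thesis .
qed
lemma QLb: "genQ * gen Lb \<sim> gen Lb"
proof -
  have "genQ * gen Lb \<sim> (gen Lb * gen L) * gen Lb" unfolding genQ_def by (rule cm_multR[OF L_Lb_comm])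
  also have "\<dots> \<sim> gen Lb" by (rule Lb_L_Lb)
  finally show ?thesis .
qed

lemma orthR: "a \<sim> a * x \<Longrightarrow> x * b \<sim> 0 \<Longrightarrow> a * b \<sim> 0"
proof -
  assume 1: "a \<sim> a * x" and 2: "x * b \<sim> 0"
  have "a * b \<sim> (a * x) * b" by (rule cm_multR[OF 1])
  also have "\<dots> = a * (x * b)" by (simp add: mult.assoc)
  also have "\<dots> \<sim> a * 0" by (rule cm_multL[OF 2])
  finally show ?thesis by simp
qed
lemma orthL: "b \<sim> x * b \<Longrightarrow> a * x \<sim> 0 \<Longrightarrow> a * b \<sim> 0"
proof -
  assume 1: "b \<sim> x * b" and 2: "a * x \<sim> 0"
  have "a * b \<sim> a * (x * b)" by (rule cm_multL[OF 1])
  also have "\<dots> = (a * x) * b" by (simp add: mult.assoc)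
  also have "\<dots> \<sim> 0 * b" by (rule cm_multR[OF 2])
  finally show ?thesis by simp
qed

lemma PL: "genP * gen L \<sim> 0" by (rule orthL[OF cm_sym[OF QL] P_Q_orth])
lemma PLb: "genP * gen Lb \<sim> 0" by (rule orthL[OF cm_sym[OF QLb] P_Q_orth])
lemma LP: "gen L * genP \<sim> 0" by (rule orthR[OF cm_sym[OF LQ] Q_P_orth])
lemma LbP: "gen Lb * genP \<sim> 0" by (rule orthR[OF cm_sym[OF LbQ] Q_P_orth])
lemma QK: "genQ * gen K \<sim> 0" by (rule orthL[OF cm_sym[OF PK] Q_P_orth])
lemma QKb: "genQ * gen Kb \<sim> 0" by (rule orthL[OF cm_sym[OF PKb] Q_P_orth])
lemma KL: "gen K * gen L \<sim> 0" by (rule orthR[OF cm_sym[OF KP] PL])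
lemma KbL: "gen Kb * gen L \<sim> 0" by (rule orthR[OF cm_sym[OF KbP] PL])
lemma LK: "gen L * gen K \<sim> 0" by (rule orthR[OF cm_sym[OF LQ] QK])
lemma LbK: "gen Lb * gen K \<sim> 0" by (rule orthR[OF cm_sym[OF LbQ] QK])

end

locale primitive_root = Ut_setting +
  assumes odd_n: "odd n" and n_gt1: "n > 1" and qn: "q ^ n = 1"
    and prim: "\<forall>k. 0 < k \<and> k < n \<longrightarrow> q ^ k \<noteq> 1"
begin

lemma q_nz: "q \<noteq> 0" using qn n_gt1 by (cases "q = 0") (auto simp: power_0_left)

lemma q_pow_inv: "inverse q ^ k * q ^ k = 1" "q ^ k * inverse q ^ k = 1"
  using q_nz by (simp_all add: power_mult_distrib[symmetric])

lemma inv_q_pow_n: "inverse q ^ n = 1" by (simp add: power_inverse qn)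

text \<open>Since n is odd, q^2 is again a primitive n-th root of unity: q ^ (2 * a) for a < n
  are pairwise distinct.\<close>

lemma q_pow_1: "q ^ a = 1 \<Longrightarrow> n dvd a"
proof (rule ccontr)
  assume h: "q ^ a = 1" "\<not> n dvd a"
  have "q ^ (a mod n) = 1" using h pow_mod_n[OF qn] by simp
  moreover have "0 < a mod n" "a mod n < n" using h n_gt1 by (auto simp: mod_greater_zero_iff_not_dvd)
  ultimately show False using prim by blast
qed

lemma q2_pow_1: "q ^ (2 * a) = 1 \<Longrightarrow> n dvd a"
proof -
  assume "q ^ (2 * a) = 1"
  then have "n dvd 2 * a" by (rule q_pow_1)
  moreover have "coprime n 2" using odd_n by (simp add: coprime_commute)
  ultimately show ?thesis using coprime_dvd_mult_right_iff by blast
qed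

lemma q2_inj:
  assumes "a < n" "b < n" "q ^ (2 * a) = q ^ (2 * b)"
  shows "a = b"
proof -
  have le: "a = b" if "a \<le> b" "b < n" "q ^ (2 * a) = q ^ (2 * b)" for a b
  proof -
    have "q ^ (2 * a) * q ^ (2 * (b - a)) = q ^ (2 * b)"
      using \<open>a \<le> b\<close> by (simp flip: power_add add: algebra_simps)
    then have "q ^ (2 * a) * q ^ (2 * (b - a)) = q ^ (2 * a) * 1"
      using that(3) by simp
    then have "q ^ (2 * (b - a)) = 1" using q_nz by simp
    then have "n dvd b - a" by (rule q2_pow_1)
    then show "a = b" using that by (cases "b - a = 0") (auto dest: dvd_imp_le)
  qed
  show ?thesis using le[of a b] le[of b a] assms by (cases "a \<le> b") auto
qed

lemma q2_ne: "a < n \<Longrightarrow> b < n \<Longrightarrow> a \<noteq> b \<Longrightarrow> q ^ (2 * a) * inverse q ^ (2 * b) \<noteq> 1"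
proof
  assume ab: "a < n" "b < n" "a \<noteq> b" and "q ^ (2 * a) * inverse q ^ (2 * b) = 1"
  then have "q ^ (2 * a) = q ^ (2 * b)"
    by (metis mult.assoc mult_1 q_pow_inv(1))
  then show False using q2_inj ab by blast
qed

lemma q_diff_nz: "q - inverse q \<noteq> 0"
proof
  assume "q - inverse q = 0"
  then have "q * q = 1" using q_nz by (simp add: field_simps)
  then have "q ^ 2 = 1" by (simp add: power2_eq_square)
  moreover have "2 < n" using odd_n n_gt1 by (metis Suc_1 Suc_lessI dvd_refl)
  ultimately show False using prim by auto
qed

lemma qint_1: "qint q 1 = 1" using q_diff_nz by (simp add: qint_def)
lemma qint_mul: "qint q m * (q - inverse q) = q ^ m - inverse q ^ m"
  using q_diff_nz by (simp add: qint_def)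
lemma qint_Suc1: "qint q (Suc m) = q * qint q m + inverse q ^ m"
proof -
  have "(q * qint q m + inverse q ^ m) * (q - inverse q) = q * (qint q m * (q - inverse q)) + (inverse q ^ m * q - inverse q ^ m * inverse q)"
    by (simp add: algebra_simps)
  also have "\<dots> = q * (q^m - inverse q^m) + (inverse q^m * q - inverse q ^ m * inverse q)" by (simp only: qint_mul)
  also have "\<dots> = q ^ Suc m - inverse q ^ Suc m" by (simp add: algebra_simps)
  also have "\<dots> = qint q (Suc m) * (q - inverse q)" by (rule qint_mul[symmetric])
  finally show ?thesis using q_diff_nz by simp
qed
lemma qint_Suc2: "qint q (Suc m) = inverse q * qint q m + q ^ m"
proof -
  have qi: "inverse q * q = 1" using q_nz by simp
  have "(inverse q * qint q m + q ^ m) * (q - inverse q) = inverse q * (qint q m * (q - inverse q)) + (q ^ m * q - q ^ m * inverse q)"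
    by (simp add: algebra_simps)
  also have "\<dots> = inverse q * (q^m - inverse q^m) + (q^m * q - q ^ m * inverse q)" by (simp only: qint_mul)
  also have "\<dots> = q ^ Suc m - inverse q ^ Suc m" by (simp add: algebra_simps)
  also have "\<dots> = qint q (Suc m) * (q - inverse q)" by (rule qint_mul[symmetric])
  finally show ?thesis using q_diff_nz by simp
qed

lemma qint_nz: "0 < k \<Longrightarrow> k < n \<Longrightarrow> qint q k \<noteq> 0"
proof
  assume k: "0 < k" "k < n" and h: "qint q k = 0"
  have "q ^ k - inverse q ^ k = 0" using h qint_mul[of k] by simp
  then have "q ^ k * q ^ k = inverse q ^ k * q ^ k" by simp
  then have "q ^ (2 * k) = 1" by (simp add: q_pow_inv power_add[symmetric] mult_2)
  then have "n dvd k" by (rule q2_pow_1)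
  then show False using k by (auto dest: dvd_imp_le)
qed

end

section \<open>The Cartan part: K-tilde = K + L and the idempotents P, Q\<close>

text \<open>Kt and Kbt play the role of the group-like generator and its inverse in U-tilde.\<close>

definition Kt :: "G free" where "Kt = gen K + gen L"
definition Kbt :: "G free" where "Kbt = gen Kb + gen Lb"

context primitive_root
begin

lemma P_gen_comm: "genP * gen x \<sim> gen x * genP"
proof (cases x)
  case K then show ?thesis using PK KP by (meson cm_trans cm_sym)
next
  case Kb then show ?thesis using PKb KbP by (meson cm_trans cm_sym)
next
  case L then show ?thesis using PL LP by (meson cm_trans cm_sym)
next
  case Lb then show ?thesis using PLb LbP by (meson cm_trans cm_sym)
next
  case E
  have "genP * gen E = gen K * (gen Kb * gen E)" by (simp add: genP_def mult.assoc)
  also have "\<dots> \<sim> gen K * smul (inverse q ^ 2) (gen E * gen Kb)" by (rule cm_multL[OF Kb_E])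
  also have "\<dots> = smul (inverse q ^ 2) ((gen K * gen E) * gen Kb)" by (simp add: mult.assoc)
  also have "\<dots> \<sim> smul (inverse q ^ 2) (smul (q^2) (gen E * gen K) * gen Kb)" by (intro cm_smul cm_multR K_E)
  also have "\<dots> = gen E * genP" by (simp add: q_pow_inv genP_def mult.assoc)
  finally show ?thesis using E by simp
next
  case F
  have "genP * gen F = gen K * (gen Kb * gen F)" by (simp add: genP_def mult.assoc)
  also have "\<dots> \<sim> gen K * smul (q ^ 2) (gen F * gen Kb)" by (rule cm_multL[OF Kb_F])
  also have "\<dots> = smul (q ^ 2) ((gen K * gen F) * gen Kb)" by (simp add: mult.assoc)
  also have "\<dots> \<sim> smul (q ^ 2) (smul (inverse q^2) (gen F * gen K) * gen Kb)" by (intro cm_smul cm_multR K_F)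
  also have "\<dots> = gen F * genP" by (simp add: q_pow_inv genP_def mult.assoc)
  finally show ?thesis using F by simp
qed

lemma P_central: "genP * y \<sim> y * genP"
  by (rule comm_closed) (rule P_gen_comm)

lemma Q_central: "genQ * y \<sim> y * genQ"
proof -
  have "genQ * y \<sim> (1 - genP) * y" by (rule cm_multR[OF Q_eq_compl])
  also have "\<dots> = y - genP * y" by (simp add: algebra_simps)
  also have "\<dots> \<sim> y - y * genP" by (rule cm_diff[OF _ P_central]) simp
  also have "\<dots> = y * (1 - genP)" by (simp add: algebra_simps)
  also have "\<dots> \<sim> y * genQ" by (rule cm_multL[OF cm_sym[OF Q_eq_compl]])
  finally show ?thesis .
qed

lemma Kbt_Kt: "Kbt * Kt \<sim> 1"
proof -
  have "Kbt * Kt = (gen Kb * gen K + gen Lb * gen L) + (gen Kb * gen L + gen Lb * gen K)"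
    by (simp add: Kt_def Kbt_def algebra_simps)
  also have "\<dots> \<sim> (genP + genQ) + (0 + 0)" unfolding genP_def genQ_def by (intro cm_add cm_sym[OF K_Kb_comm] cm_sym[OF L_Lb_comm] KbL LbK)
  also have "\<dots> \<sim> 1 + (0 + 0)" by (intro cm_add P_plus_Q cm_refl)
  finally show ?thesis by simp
qed

lemma Kt_E: "Kt * gen E \<sim> smul (q^2) (gen E * Kt)"
proof -
  have "Kt * gen E = gen K * gen E + gen L * gen E" by (simp add: Kt_def algebra_simps)
  also have "\<dots> \<sim> smul (q^2) (gen E * gen K) + smul (q^2) (gen E * gen L)" by (intro cm_add K_E L_E)
  finally show ?thesis by (simp add: Kt_def algebra_simps smul_add)
qed
lemma Kt_F: "Kt * gen F \<sim> smul (inverse q^2) (gen F * Kt)"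
proof -
  have "Kt * gen F = gen K * gen F + gen L * gen F" by (simp add: Kt_def algebra_simps)
  also have "\<dots> \<sim> smul (inverse q^2) (gen F * gen K) + smul (inverse q^2) (gen F * gen L)" by (intro cm_add K_F L_F)
  finally show ?thesis by (simp add: Kt_def algebra_simps smul_add)
qed
lemma Kbt_E: "Kbt * gen E \<sim> smul (inverse q^2) (gen E * Kbt)"
proof -
  have "Kbt * gen E = gen Kb * gen E + gen Lb * gen E" by (simp add: Kbt_def algebra_simps)
  also have "\<dots> \<sim> smul (inverse q^2) (gen E * gen Kb) + smul (inverse q^2) (gen E * gen Lb)" by (intro cm_add Kb_E Lb_E)
  finally show ?thesis by (simp add: Kbt_def algebra_simps smul_add)
qed
lemma Kbt_F: "Kbt * gen F \<sim> smul (q^2) (gen F * Kbt)"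
proof -
  have "Kbt * gen F = gen Kb * gen F + gen Lb * gen F" by (simp add: Kbt_def algebra_simps)
  also have "\<dots> \<sim> smul (q^2) (gen F * gen Kb) + smul (q^2) (gen F * gen Lb)" by (intro cm_add Kb_F Lb_F)
  finally show ?thesis by (simp add: Kbt_def algebra_simps smul_add)
qed
lemma EF: "gen E * gen F - gen F * gen E \<sim> smul (inverse (q - inverse q)) (Kt - Kbt)"
  using E_F_commutator by (simp add: Kt_def Kbt_def)

text \<open>Since K L = L K = 0, the powers of Kt split, so Kt ^ n = P + Q = 1 and Kbt = Kt ^ (n - 1).\<close>

lemma Km_L: "m \<ge> 1 \<Longrightarrow> gen K ^ m * gen L \<sim> 0"
proof -
  assume "m \<ge> 1"
  then obtain k where m: "m = Suc k" by (cases m) auto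
  have "gen K ^ m * gen L = gen K ^ k * (gen K * gen L)" by (simp add: m power_Suc2 mult.assoc del: power_Suc)
  also have "\<dots> \<sim> gen K ^ k * 0" by (rule cm_multL[OF KL])
  finally show ?thesis by simp
qed
lemma Lm_K: "m \<ge> 1 \<Longrightarrow> gen L ^ m * gen K \<sim> 0"
proof -
  assume "m \<ge> 1"
  then obtain k where m: "m = Suc k" by (cases m) auto
  have "gen L ^ m * gen K = gen L ^ k * (gen L * gen K)" by (simp add: m power_Suc2 mult.assoc del: power_Suc)
  also have "\<dots> \<sim> gen L ^ k * 0" by (rule cm_multL[OF LK])
  finally show ?thesis by simp
qed

lemma Kt_pow_split: "m \<ge> 1 \<Longrightarrow> Kt ^ m \<sim> gen K ^ m + gen L ^ m"
proof (induction m rule: dec_induct)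
  case base then show ?case by (simp add: Kt_def)
next
  case (step m)
  have "Kt ^ Suc m = Kt ^ m * Kt" by (rule power_Suc2)
  also have "\<dots> \<sim> (gen K ^ m + gen L ^ m) * Kt" by (rule cm_multR[OF step.IH])
  also have "\<dots> = (gen K ^ Suc m + gen L ^ Suc m) + (gen K ^ m * gen L + gen L ^ m * gen K)"
    by (simp add: Kt_def algebra_simps power_commutes)
  also have "\<dots> \<sim> (gen K ^ Suc m + gen L ^ Suc m) + (0 + 0)"
    by (intro cm_add cm_refl Km_L Lm_K step.hyps)
  finally show ?case by simp
qed

lemma Kt_pow_n: "Kt ^ n \<sim> 1"
proof -
  have "Kt ^ n \<sim> gen K ^ n + gen L ^ n" by (rule Kt_pow_split) (use n_gt1 in simp)
  also have "\<dots> \<sim> genP + genQ" unfolding genP_def genQ_def by (intro cm_add K_pow_n L_pow_n)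
  also have "\<dots> \<sim> 1" by (rule P_plus_Q)
  finally show ?thesis .
qed

lemma Kbt_eq_Kt_pow: "Kbt \<sim> Kt ^ (n - 1)"
proof -
  have "Kbt = Kbt * 1" by simp
  also have "\<dots> \<sim> Kbt * Kt ^ n" by (rule cm_multL[OF cm_sym[OF Kt_pow_n]])
  also have "Kt ^ n = Kt * Kt ^ (n - 1)" using n_gt1 by (metis One_nat_def Suc_pred less_trans power_Suc zero_less_one)
  also have "Kbt * (Kt * Kt ^ (n - 1)) = (Kbt * Kt) * Kt ^ (n - 1)" by (simp add: mult.assoc)
  also have "\<dots> \<sim> 1 * Kt ^ (n - 1)" by (rule cm_multR[OF Kbt_Kt])
  finally show ?thesis by simp
qed

lemma P_Kt: "genP * Kt \<sim> gen K"
proof -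
  have "genP * Kt = genP * gen K + genP * gen L" by (simp add: Kt_def algebra_simps)
  also have "\<dots> \<sim> gen K + 0" by (intro cm_add PK PL)
  finally show ?thesis by simp
qed
lemma Q_Kt: "genQ * Kt \<sim> gen L"
proof -
  have "genQ * Kt = genQ * gen K + genQ * gen L" by (simp add: Kt_def algebra_simps)
  also have "\<dots> \<sim> 0 + gen L" by (intro cm_add QK QL)
  finally show ?thesis by simp
qed

lemma idem_pow:
  assumes idem: "p * p \<sim> p" and cen: "\<And>y. p * y \<sim> y * p"
  shows "(p * x) ^ Suc m \<sim> p * x ^ Suc m"
proof (induction m)
  case 0 then show ?case by simp
next
  case (Suc m)
  have "(p * x) ^ Suc (Suc m) = (p * x) ^ Suc m * (p * x)" by (rule power_Suc2)
  also have "\<dots> \<sim> (p * x ^ Suc m) * (p * x)" by (rule cm_multR[OF Suc.IH])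
  also have "\<dots> = p * (x ^ Suc m * p) * x" by (simp add: mult.assoc)
  also have "\<dots> \<sim> p * (p * x ^ Suc m) * x" by (intro cm_multL cm_multR cm_sym[OF cen])
  also have "\<dots> = (p * p) * x ^ Suc (Suc m)" by (simp add: mult.assoc power_commutes)
  also have "\<dots> \<sim> p * x ^ Suc (Suc m)" by (rule cm_multR[OF idem])
  finally show ?case .
qed

lemma Kpow_eq: "Kpow genP i \<sim> genP * Kt ^ i"
proof (cases i)
  case 0 then show ?thesis by (simp add: Kpow_def)
next
  case (Suc m)
  have "Kpow genP i = gen K ^ Suc m" by (simp add: Kpow_def Suc)
  also have "\<dots> \<sim> (genP * Kt) ^ Suc m" by (rule cm_power[OF cm_sym[OF P_Kt]])
  also have "\<dots> \<sim> genP * Kt ^ Suc m" by (rule idem_pow[OF P_idem P_central])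
  finally show ?thesis by (simp add: Suc)
qed
lemma Lpow_eq: "Lpow genQ i \<sim> genQ * Kt ^ i"
proof (cases i)
  case 0 then show ?thesis by (simp add: Lpow_def)
next
  case (Suc m)
  have "Lpow genQ i = gen L ^ Suc m" by (simp add: Lpow_def Suc)
  also have "\<dots> \<sim> (genQ * Kt) ^ Suc m" by (rule cm_power[OF cm_sym[OF Q_Kt]])
  also have "\<dots> \<sim> genQ * Kt ^ Suc m" by (rule idem_pow[OF Q_idem Q_central])
  finally show ?thesis by (simp add: Suc)
qed

lemma K_eq: "gen K \<sim> genP * Kt" by (rule cm_sym[OF P_Kt])
lemma L_eq: "gen L \<sim> genQ * Kt" by (rule cm_sym[OF Q_Kt])
lemma Kb_eq: "gen Kb \<sim> genP * Kbt"
proof -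
  have "genP * Kbt = genP * gen Kb + genP * gen Lb" by (simp add: Kbt_def algebra_simps)
  also have "\<dots> \<sim> gen Kb + 0" by (intro cm_add PKb PLb)
  finally show ?thesis by (simp add: cm_sym)
qed
lemma Lb_eq: "gen Lb \<sim> genQ * Kbt"
proof -
  have "genQ * Kbt = genQ * gen Kb + genQ * gen Lb" by (simp add: Kbt_def algebra_simps)
  also have "\<dots> \<sim> 0 + gen Lb" by (intro cm_add QKb QLb)
  finally show ?thesis by (simp add: cm_sym)
qed

end

context primitive_root
begin

lemma Kt_pow_Epow: "Kt ^ i * gen E ^ m \<sim> smul (q ^ (2 * i * m)) (gen E ^ m * Kt ^ i)"
  using qcomm_pow[OF Kt_E, of i m] by (simp only: power_mult[symmetric] mult.assoc mult_1 power_one_right)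
lemma Kt_pow_Fpow: "Kt ^ i * gen F ^ m \<sim> smul (inverse q ^ (2 * i * m)) (gen F ^ m * Kt ^ i)"
  using qcomm_pow[OF Kt_F, of i m] by (simp only: power_mult[symmetric] mult.assoc mult_1 power_one_right)
lemma Kbt_Epow: "Kbt * gen E ^ m \<sim> smul (inverse q ^ (2 * m)) (gen E ^ m * Kbt)"
  using qcomm_pow[OF Kbt_E, of 1 m] by (simp only: power_mult[symmetric] mult.assoc mult_1 power_one_right)
lemma Kbt_Fpow: "Kbt * gen F ^ m \<sim> smul (q ^ (2 * m)) (gen F ^ m * Kbt)"
  using qcomm_pow[OF Kbt_F, of 1 m] by (simp only: power_mult[symmetric] mult.assoc mult_1 power_one_right)

lemma Epow_Kt_pow: "gen E ^ m * Kt ^ i \<sim> smul (inverse q ^ (2 * i * m)) (Kt ^ i * gen E ^ m)"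
proof -
  have "gen E ^ m * Kt ^ i = smul (inverse q ^ (2 * i * m)) (smul (q ^ (2 * i * m)) (gen E ^ m * Kt ^ i))"
    by (simp add: q_pow_inv)
  also have "\<dots> \<sim> smul (inverse q ^ (2 * i * m)) (Kt ^ i * gen E ^ m)"
    by (rule cm_smul, rule cm_sym, rule Kt_pow_Epow)
  finally show ?thesis .
qed

lemma Fpow_Kt_pow: "gen F ^ m * Kt ^ i \<sim> smul (q ^ (2 * i * m)) (Kt ^ i * gen F ^ m)"
proof -
  have "gen F ^ m * Kt ^ i = smul (q ^ (2 * i * m)) (smul (inverse q ^ (2 * i * m)) (gen F ^ m * Kt ^ i))"
    by (simp add: q_pow_inv)
  also have "\<dots> \<sim> smul (q ^ (2 * i * m)) (Kt ^ i * gen F ^ m)"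
    by (rule cm_smul, rule cm_sym, rule Kt_pow_Fpow)
  finally show ?thesis .
qed

lemma E_Kt_pow: "gen E * Kt ^ i \<sim> smul (inverse q ^ (2 * i)) (Kt ^ i * gen E)"
  using Epow_Kt_pow[of 1 i] by simp

lemma F_Kt_pow: "gen F * Kt ^ i \<sim> smul (q ^ (2 * i)) (Kt ^ i * gen F)"
  using Fpow_Kt_pow[of 1 i] by simp

lemma Kt_Epow: "Kt * gen E ^ m \<sim> smul (q ^ (2 * m)) (gen E ^ m * Kt)"
  using Kt_pow_Epow[of 1 m] by simp

text \<open>The recursions [m+2] = q [m+1] + q^-(m+1) = q^-1 [m+1] + q^(m+1), in the normalized
  forms in which they enter the commutator formulas below.\<close>

lemma qint_rec_coeffs:
  defines "d \<equiv> q - inverse q"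
  shows "qint q (Suc m) / d * inverse q ^ m * inverse q ^ 2 + inverse d = qint q (Suc (Suc m)) / d * inverse q ^ Suc m"
    and "qint q (Suc m) / d * q ^ m * q ^ 2 + inverse d = qint q (Suc (Suc m)) / d * q ^ Suc m"
    and "qint q (Suc m) / d * q ^ m + inverse d * q ^ (2 * Suc m) = qint q (Suc (Suc m)) / d * q ^ Suc m"
    and "qint q (Suc m) / d * inverse q ^ m + inverse d * inverse q ^ (2 * Suc m) = qint q (Suc (Suc m)) / d * inverse q ^ Suc m"
proof -
  have i1: "(inverse q * q) ^ k = 1" "inverse q * q = 1" "q * inverse q = 1" for k using q_nz by simp_all
  have "qint q (Suc (Suc m)) * inverse q ^ Suc m = qint q (Suc m) * (inverse q ^ m * inverse q ^ 2) + (inverse q * q) ^ Suc m"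
    by (subst qint_Suc2) (simp add: algebra_simps power_mult_distrib power2_eq_square)
  then show "qint q (Suc m) / d * inverse q ^ m * inverse q ^ 2 + inverse d = qint q (Suc (Suc m)) / d * inverse q ^ Suc m"
    by (simp only: i1) (simp add: divide_inverse algebra_simps)
  have "qint q (Suc (Suc m)) * q ^ Suc m = qint q (Suc m) * (q ^ m * q ^ 2) + (inverse q * q) ^ Suc m"
    by (subst qint_Suc1) (simp add: algebra_simps power_mult_distrib power2_eq_square)
  then show "qint q (Suc m) / d * q ^ m * q ^ 2 + inverse d = qint q (Suc (Suc m)) / d * q ^ Suc m"
    by (simp only: i1) (simp add: divide_inverse algebra_simps)
  have "qint q (Suc (Suc m)) * q ^ Suc m = qint q (Suc m) * q ^ m * (inverse q * q) + q ^ Suc m * q ^ Suc m"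
    by (subst qint_Suc2) (simp add: algebra_simps)
  then have "qint q (Suc (Suc m)) * q ^ Suc m = qint q (Suc m) * q ^ m + q ^ (2 * Suc m)"
    by (simp only: i1 mult_1_right) (simp add: power_add[symmetric] mult_2)
  then show "qint q (Suc m) / d * q ^ m + inverse d * q ^ (2 * Suc m) = qint q (Suc (Suc m)) / d * q ^ Suc m"
    by (simp add: divide_inverse algebra_simps del: power_Suc)
  have "qint q (Suc (Suc m)) * inverse q ^ Suc m = qint q (Suc m) * inverse q ^ m * (q * inverse q) + inverse q ^ Suc m * inverse q ^ Suc m"
    by (subst qint_Suc1) (simp add: algebra_simps)
  then have "qint q (Suc (Suc m)) * inverse q ^ Suc m = qint q (Suc m) * inverse q ^ m + inverse q ^ (2 * Suc m)"
    by (simp only: i1 mult_1_right) (simp add: power_add[symmetric] mult_2)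
  then show "qint q (Suc m) / d * inverse q ^ m + inverse d * inverse q ^ (2 * Suc m) = qint q (Suc (Suc m)) / d * inverse q ^ Suc m"
    by (simp add: divide_inverse algebra_simps del: power_Suc)
qed

lemma E_Fpow_commutator: "gen E * gen F ^ Suc m - gen F ^ Suc m * gen E \<sim>
   smul (qint q (Suc m) / (q - inverse q)) (gen F ^ m * (smul (inverse q ^ m) Kt - smul (q ^ m) Kbt))"
proof (induction m)
  case 0 then show ?case using EF qint_1[unfolded One_nat_def] by (simp add: divide_inverse)
next
  case (Suc m)
  let ?e = "gen E" and ?f = "gen F" and ?d = "q - inverse q" and ?iq = "inverse q"
  let ?c = "qint q (Suc m) / ?d"
  have "?e * ?f ^ Suc (Suc m) - ?f ^ Suc (Suc m) * ?e = (?e * ?f ^ Suc m - ?f ^ Suc m * ?e) * ?f + ?f ^ Suc m * (?e * ?f - ?f * ?e)"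
    by (simp add: algebra_simps power_Suc2 del: power_Suc)
  also have "\<dots> \<sim> smul ?c (?f ^ m * (smul (?iq ^ m) Kt - smul (q ^ m) Kbt)) * ?f + ?f ^ Suc m * smul (inverse ?d) (Kt - Kbt)"
    by (intro cm_add cm_multR cm_multL Suc.IH EF)
  also have "\<dots> = smul (?c * ?iq ^ m) (?f ^ m * (Kt * ?f)) - smul (?c * q ^ m) (?f ^ m * (Kbt * ?f))
        + (smul (inverse ?d) (?f ^ Suc m * Kt) - smul (inverse ?d) (?f ^ Suc m * Kbt))"
    by (simp add: smul_diff right_diff_distrib left_diff_distrib mult.assoc)
  also have "\<dots> \<sim> smul (?c * ?iq ^ m) (?f ^ m * smul (?iq^2) (?f * Kt)) - smul (?c * q ^ m) (?f ^ m * smul (q^2) (?f * Kbt))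
        + (smul (inverse ?d) (?f ^ Suc m * Kt) - smul (inverse ?d) (?f ^ Suc m * Kbt))"
    by (intro cm_add cm_diff cm_smul cm_multL Kt_F Kbt_F cm_refl)
  also have "\<dots> = smul (?c * ?iq ^ m * ?iq^2 + inverse ?d) (?f ^ Suc m * Kt) - smul (?c * q ^ m * q^2 + inverse ?d) (?f ^ Suc m * Kbt)"
    by (simp add: add_smul mult.assoc power_Suc2 del: power_Suc)
  also have "?c * ?iq ^ m * ?iq^2 + inverse ?d = qint q (Suc (Suc m)) / ?d * ?iq ^ Suc m"
    using qint_rec_coeffs(1)[of m] by simp
  also have "?c * q ^ m * q^2 + inverse ?d = qint q (Suc (Suc m)) / ?d * q ^ Suc m"
    using qint_rec_coeffs(2)[of m] by simp
  also have "smul (qint q (Suc (Suc m)) / ?d * ?iq ^ Suc m) (?f ^ Suc m * Kt) - smul (qint q (Suc (Suc m)) / ?d * q ^ Suc m) (?f ^ Suc m * Kbt)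
     = smul (qint q (Suc (Suc m)) / ?d) (?f ^ Suc m * (smul (?iq ^ Suc m) Kt - smul (q ^ Suc m) Kbt))"
    by (simp add: smul_diff right_diff_distrib)
  finally show ?case .
qed

lemma Epow_F_commutator: "gen E ^ Suc m * gen F - gen F * gen E ^ Suc m \<sim>
   smul (qint q (Suc m) / (q - inverse q)) (gen E ^ m * (smul (q ^ m) Kt - smul (inverse q ^ m) Kbt))"
proof (induction m)
  case 0 then show ?case using EF qint_1[unfolded One_nat_def] by (simp add: divide_inverse)
next
  case (Suc m)
  let ?e = "gen E" and ?f = "gen F" and ?d = "q - inverse q" and ?iq = "inverse q"
  let ?c = "qint q (Suc m) / ?d"
  have "?e ^ Suc (Suc m) * ?f - ?f * ?e ^ Suc (Suc m) = ?e * (?e ^ Suc m * ?f - ?f * ?e ^ Suc m) + (?e * ?f - ?f * ?e) * ?e ^ Suc m"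
    by (simp add: algebra_simps del: power_Suc) (simp add: mult.assoc)
  also have "\<dots> \<sim> ?e * smul ?c (?e ^ m * (smul (q ^ m) Kt - smul (?iq ^ m) Kbt)) + smul (inverse ?d) (Kt - Kbt) * ?e ^ Suc m"
    by (intro cm_add cm_multR cm_multL Suc.IH EF)
  also have "\<dots> = smul (?c * q ^ m) (?e ^ Suc m * Kt) - smul (?c * ?iq ^ m) (?e ^ Suc m * Kbt)
        + (smul (inverse ?d) (Kt * ?e ^ Suc m) - smul (inverse ?d) (Kbt * ?e ^ Suc m))"
    by (simp add: smul_diff right_diff_distrib left_diff_distrib mult.assoc del: power_Suc) (simp add: mult.assoc[symmetric])
  also have "\<dots> \<sim> smul (?c * q ^ m) (?e ^ Suc m * Kt) - smul (?c * ?iq ^ m) (?e ^ Suc m * Kbt)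
        + (smul (inverse ?d) (smul (q ^ (2 * Suc m)) (?e ^ Suc m * Kt)) - smul (inverse ?d) (smul (?iq ^ (2 * Suc m)) (?e ^ Suc m * Kbt)))"
    using Kt_pow_Epow[of 1 "Suc m"] Kbt_Epow[of "Suc m"]
    by (intro cm_add cm_diff cm_smul cm_refl) simp_all
  also have "\<dots> = smul (?c * q ^ m + inverse ?d * q ^ (2 * Suc m)) (?e ^ Suc m * Kt) - smul (?c * ?iq ^ m + inverse ?d * ?iq ^ (2 * Suc m)) (?e ^ Suc m * Kbt)"
    by (simp add: add_smul del: power_Suc)
  also have "?c * q ^ m + inverse ?d * q ^ (2 * Suc m) = qint q (Suc (Suc m)) / ?d * q ^ Suc m"
    using qint_rec_coeffs(3)[of m] by simp
  also have "?c * ?iq ^ m + inverse ?d * ?iq ^ (2 * Suc m) = qint q (Suc (Suc m)) / ?d * ?iq ^ Suc m"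
    using qint_rec_coeffs(4)[of m] by simp
  also have "smul (qint q (Suc (Suc m)) / ?d * q ^ Suc m) (?e ^ Suc m * Kt) - smul (qint q (Suc (Suc m)) / ?d * ?iq ^ Suc m) (?e ^ Suc m * Kbt)
     = smul (qint q (Suc (Suc m)) / ?d) (?e ^ Suc m * (smul (q ^ Suc m) Kt - smul (?iq ^ Suc m) Kbt))"
    by (simp add: smul_diff right_diff_distrib del: power_Suc)
  finally show ?case .
qed

end

section \<open>The spectral projections of K-tilde\<close>

text \<open>Since Kt ^ n = 1 and the q ^ (2 j), j < n, are the distinct n-th roots of unity, the
  elements pi_j = (1/n) sum_i q^(-2ij) Kt^i are orthogonal idempotents summing to 1 with
  Kt pi_j = q^(2j) pi_j.  They diagonalize the Cartan part of R-tilde.\<close>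

definition kproj :: "complex \<Rightarrow> nat \<Rightarrow> nat \<Rightarrow> G free" where
  "kproj q n j = smul (1 / of_nat n) (\<Sum>i<n. smul (inverse q ^ (2 * i * j)) (Kt ^ i))"

context primitive_root
begin

abbreviation \<pi> :: "nat \<Rightarrow> G free" where "\<pi> j \<equiv> kproj q n j"

lemma q2_char_sum:
  assumes "a < n" "b < n"
  shows "(\<Sum>k<n. (q ^ (2 * a) * inverse q ^ (2 * b)) ^ k) = (if a = b then of_nat n else 0)"
proof -
  let ?x = "q ^ (2 * a) * inverse q ^ (2 * b)"
  have "?x ^ n = (q ^ n) ^ (2 * a) * (inverse q ^ n) ^ (2 * b)"
    by (simp add: power_mult_distrib power_mult[symmetric] mult.commute)
  then have xn: "?x ^ n = 1" by (simp add: qn inv_q_pow_n)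
  have "?x = 1 \<longleftrightarrow> a = b" using q2_ne[OF assms] by (auto simp: q_pow_inv)
  then show ?thesis using char_sum[OF xn] by simp
qed

lemma proj_periodic: "\<pi> (j + n) = \<pi> j"
proof -
  have "inverse q ^ (2 * i * (j + n)) = inverse q ^ (2 * i * j) * (inverse q ^ n) ^ (2 * i)" for i
    by (simp add: algebra_simps power_add power_mult[symmetric])
  then show ?thesis by (simp add: kproj_def inv_q_pow_n)
qed

text \<open>pi_j is an eigenvector of multiplication by Kt: shifting the summation index
  multiplies the sum by q^(2j).\<close>

lemma Kt_proj: "Kt * \<pi> j \<sim> smul (q ^ (2 * j)) (\<pi> j)"
proof -
  let ?g = "\<lambda>i. smul (q ^ (2 * j) * inverse q ^ (2 * i * j)) (Kt ^ i)"
  have "Kt * \<pi> j = smul (1 / of_nat n) (\<Sum>i<n. ?g (Suc i))"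
  proof -
    have "?g (Suc i) = smul (inverse q ^ (2 * i * j)) (Kt ^ Suc i)" for i
    proof -
      have e: "2 * Suc i * j = 2 * i * j + 2 * j" by simp
      have "q ^ (2 * j) * inverse q ^ (2 * Suc i * j) = inverse q ^ (2 * i * j) * (inverse q ^ (2*j) * q ^ (2 * j))"
        unfolding e power_add by (simp only: mult_ac)
      then show ?thesis by (simp add: q_pow_inv)
    qed
    then show ?thesis by (simp add: kproj_def smul_sum sum_distrib_left)
  qed
  also have "\<dots> \<sim> smul (1 / of_nat n) (\<Sum>i<n. ?g i)"
  proof (intro cm_smul sum_shift1)
    have "?g n = smul (q ^ (2 * j) * (inverse q ^ n) ^ (2 * j)) (Kt ^ n)"
      by (simp add: power_mult[symmetric] algebra_simps)
    also have "\<dots> = smul (q ^ (2 * j)) (Kt ^ n)" by (simp add: inv_q_pow_n)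
    also have "\<dots> \<sim> smul (q ^ (2 * j)) 1" by (intro cm_smul Kt_pow_n)
    finally show "?g n \<sim> ?g 0" by simp
  qed
  also have "\<dots> = smul (q ^ (2 * j)) (\<pi> j)" by (simp add: kproj_def smul_sum mult.commute)
  finally show ?thesis .
qed

lemma proj_Kt_comm: "\<pi> j * Kt = Kt * \<pi> j"
  by (simp add: kproj_def sum_distrib_left sum_distrib_right power_commutes)

lemma Kt_pow_proj: "Kt ^ k * \<pi> j \<sim> smul (q ^ (2 * j * k)) (\<pi> j)"
proof (induction k)
  case 0 then show ?case by simp
next
  case (Suc k)
  have "Kt ^ Suc k * \<pi> j = Kt * (Kt ^ k * \<pi> j)" by (simp add: mult.assoc)
  also have "\<dots> \<sim> Kt * smul (q ^ (2 * j * k)) (\<pi> j)" by (rule cm_multL[OF Suc.IH])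
  also have "\<dots> = smul (q ^ (2 * j * k)) (Kt * \<pi> j)" by simp
  also have "\<dots> \<sim> smul (q ^ (2 * j * k)) (smul (q ^ (2 * j)) (\<pi> j))" by (intro cm_smul Kt_proj)
  also have "\<dots> = smul (q ^ (2 * j * Suc k)) (\<pi> j)" by (simp add: power_add mult.commute)
  finally show ?case .
qed

lemma proj_Kt_pow_comm: "\<pi> j * Kt ^ k = Kt ^ k * \<pi> j"
  by (rule power_commuting_commutes[symmetric]) (simp add: proj_Kt_comm)

lemma proj_Kt_pow: "\<pi> j * Kt ^ k \<sim> smul (q ^ (2 * j * k)) (\<pi> j)"
  using Kt_pow_proj by (simp add: proj_Kt_pow_comm)

lemma E_proj: "gen E * \<pi> j \<sim> \<pi> (Suc j) * gen E"
proof -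
  have "gen E * \<pi> j = smul (1 / of_nat n) (\<Sum>i<n. smul (inverse q ^ (2 * i * j)) (gen E * Kt ^ i))"
    by (simp add: kproj_def smul_sum sum_distrib_left)
  also have "\<dots> \<sim> smul (1 / of_nat n) (\<Sum>i<n. smul (inverse q ^ (2 * i * j)) (smul (inverse q ^ (2 * i)) (Kt ^ i * gen E)))"
    by (intro cm_smul cm_sum E_Kt_pow)
  also have "\<dots> = \<pi> (Suc j) * gen E"
  proof -
    have ex: "inverse q ^ (2 * i + 2 * i * j) = inverse q ^ (2 * i * j) * inverse q ^ (2 * i)" for i
      by (simp only: power_add mult.commute)
    show ?thesis by (simp add: kproj_def smul_sum sum_distrib_right ex)
  qed
  finally show ?thesis .
qed

lemma F_proj: "gen F * \<pi> j \<sim> \<pi> (j + n - 1) * gen F"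
proof -
  have ex: "inverse q ^ (2 * i * (j + n - 1)) = inverse q ^ (2 * i * j) * q ^ (2 * i)" for i
  proof -
    obtain N where nN: "n = Suc N" using n_gt1 by (cases n) auto
    have e: "2 * i * (j + n - 1) + 2 * i = 2 * i * j + n * (2 * i)" by (simp add: nN algebra_simps)
    have "inverse q ^ (2 * i * (j + n - 1)) * inverse q ^ (2 * i) = inverse q ^ (2 * i * j) * (inverse q ^ n) ^ (2 * i)"
      by (simp only: power_add[symmetric] power_mult[symmetric] e)
    then have "inverse q ^ (2 * i * (j + n - 1)) * inverse q ^ (2 * i) = inverse q ^ (2 * i * j)" by (simp add: inv_q_pow_n)
    then show ?thesis using q_pow_inv[of "2*i"] by (metis mult.assoc mult_1_right)
  qed
  have "gen F * \<pi> j = smul (1 / of_nat n) (\<Sum>i<n. smul (inverse q ^ (2 * i * j)) (gen F * Kt ^ i))"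
    by (simp add: kproj_def smul_sum sum_distrib_left)
  also have "\<dots> \<sim> smul (1 / of_nat n) (\<Sum>i<n. smul (inverse q ^ (2 * i * j)) (smul (q ^ (2 * i)) (Kt ^ i * gen F)))"
    by (intro cm_smul cm_sum F_Kt_pow)
  also have "\<dots> = \<pi> (j + n - 1) * gen F"
    by (simp add: kproj_def smul_sum sum_distrib_right ex[unfolded One_nat_def])
  finally show ?thesis .
qed

lemma proj_orth: "j < n \<Longrightarrow> l < n \<Longrightarrow> \<pi> j * \<pi> l \<sim> (if j = l then \<pi> j else 0)"
proof -
  assume jl: "j < n" "l < n"
  let ?x = "q ^ (2 * j) * inverse q ^ (2 * l)"
  have xk: "inverse q ^ (2 * k * l) * q ^ (2 * j * k) = ?x ^ k" for k
  proof -
    have "?x ^ k = q ^ (2 * j * k) * inverse q ^ (2 * l * k)" by (simp only: power_mult_distrib power_mult)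
    then show ?thesis by (simp only: mult.commute mult.left_commute)
  qed
  have "\<pi> j * \<pi> l = smul (1 / of_nat n) (\<Sum>k<n. smul (inverse q ^ (2 * k * l)) (\<pi> j * Kt ^ k))"
    by (simp add: kproj_def[of q n l] smul_sum sum_distrib_left)
  also have "\<dots> \<sim> smul (1 / of_nat n) (\<Sum>k<n. smul (inverse q ^ (2 * k * l)) (smul (q ^ (2 * j * k)) (\<pi> j)))"
    by (intro cm_smul cm_sum proj_Kt_pow)
  also have "\<dots> = smul (1 / of_nat n * (\<Sum>k<n. ?x ^ k)) (\<pi> j)"
    by (simp only: smul_smul xk sum_smul[symmetric])
  also have "\<dots> = (if j = l then \<pi> j else 0)"
    using q2_char_sum[OF jl] n_gt1 by simp
  finally show ?thesis .
qed

lemma proj_sum: "(\<Sum>j<n. \<pi> j) = 1"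
proof -
  have coeff: "(\<Sum>j<n. inverse q ^ (2 * i * j)) = (if i = 0 then of_nat n else 0)" if "i < n" for i
    using q2_char_sum[of 0 i] that n_gt1 by (simp add: power_mult)
  have "(\<Sum>j<n. \<pi> j) = smul (1 / of_nat n) (\<Sum>j<n. \<Sum>i<n. smul (inverse q ^ (2 * i * j)) (Kt ^ i))"
    by (simp add: kproj_def smul_sum)
  also have "\<dots> = smul (1 / of_nat n) (\<Sum>i<n. \<Sum>j<n. smul (inverse q ^ (2 * i * j)) (Kt ^ i))"
    by (rule arg_cong[where f="smul _"], rule sum.swap)
  also have "\<dots> = smul (1 / of_nat n) (\<Sum>i<n. smul (\<Sum>j<n. inverse q ^ (2 * i * j)) (Kt ^ i))"
    by (simp only: sum_smul)
  also have "\<dots> = smul (1 / of_nat n) (\<Sum>i<n. if i = 0 then smul (of_nat n) 1 else 0)"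
    by (intro arg_cong[where f="smul _"] sum.cong) (auto simp: coeff)
  also have "\<dots> = 1" using n_gt1 by simp
  finally show ?thesis .
qed

end

section \<open>Factorization of R-tilde\<close>

definition cartan :: "complex \<Rightarrow> nat \<Rightarrow> (G + G) free" where
  "cartan q n = (\<Sum>j<n. tensor (kproj q n j) (Kt ^ j))"
definition cartan_inv :: "complex \<Rightarrow> nat \<Rightarrow> (G + G) free" where
  "cartan_inv q n = (\<Sum>l<n. tensor (kproj q n l) (Kt ^ (n - l)))"
definition qcoef :: "complex \<Rightarrow> nat \<Rightarrow> complex" where
  "qcoef q m = (q - inverse q) ^ m / qfact q m * q ^ (m * (m - 1) div 2)"
definition quasiR :: "complex \<Rightarrow> nat \<Rightarrow> (G + G) free" where
  "quasiR q n = (\<Sum>m<n. smul (qcoef q m) (tensor (gen E ^ m) (gen F ^ m)))"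
definition unit_proj :: "(G + G) free" where
  "unit_proj = tensor genP genP + tensor genQ genQ"
definition Rfact :: "complex \<Rightarrow> nat \<Rightarrow> (G + G) free" where
  "Rfact q n = unit_proj * cartan q n * quasiR q n"

context primitive_root
begin

lemma PP_central: "tensor genP genP * z \<approx> z * tensor genP genP" by (rule tensor_central) (rule P_central)+
lemma QQ_central: "tensor genQ genQ * z \<approx> z * tensor genQ genQ" by (rule tensor_central) (rule Q_central)+
lemma unit_proj_central: "unit_proj * z \<approx> z * unit_proj"
  unfolding unit_proj_def distrib_left distrib_right by (intro cm_add PP_central QQ_central)

lemma unit_proj_idem: "unit_proj * unit_proj \<approx> unit_proj"
proof -
  have "unit_proj * unit_proj = (tensor genP genP * tensor genP genP + tensor genQ genQ * tensor genQ genQ) + (tensor genP genP * tensor genQ genQ + tensor genQ genQ * tensor genP genP)"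
    by (simp add: unit_proj_def algebra_simps)
  also have "\<dots> \<approx> (tensor (genP * genP) (genP * genP) + tensor (genQ * genQ) (genQ * genQ)) + (tensor (genP * genQ) (genP * genQ) + tensor (genQ * genP) (genQ * genP))"
    by (intro cm_add tensor_mult)
  also have "\<dots> \<approx> (tensor genP genP + tensor genQ genQ) + (tensor 0 0 + tensor 0 0)"
    by (intro cm_add tensor_cong P_idem Q_idem P_Q_orth Q_P_orth)
  finally show ?thesis by (simp add: unit_proj_def)
qed

lemma central_move:
  assumes cen: "\<And>y. p * y \<sim> y * p" and kp: "kp \<sim> p * Kt ^ i" and comm: "x * Kt ^ i \<sim> smul c (Kt ^ i * x)"
  shows "x * kp \<sim> smul c (p * (Kt ^ i * x))"
proof -
  have "x * kp \<sim> x * (p * Kt ^ i)" by (rule cm_multL[OF kp])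
  also have "\<dots> = (x * p) * Kt ^ i" by (simp add: mult.assoc)
  also have "\<dots> \<sim> (p * x) * Kt ^ i" by (rule cm_multR, rule cm_sym, rule cen)
  also have "\<dots> = p * (x * Kt ^ i)" by (simp add: mult.assoc)
  also have "\<dots> \<sim> p * smul c (Kt ^ i * x)" by (rule cm_multL[OF comm])
  finally show ?thesis by simp
qed

lemma tensor_summand:
  assumes cen: "\<And>y. p * y \<sim> y * p" and kpi: "kpi \<sim> p * Kt ^ i" and kpj: "kpj \<sim> p * Kt ^ j"
  shows "tensor (gen E ^ m * kpi) (gen F ^ m * kpj) \<approx>
     smul (inverse q ^ (2 * i * m) * q ^ (2 * j * m)) (tensor p p * tensor (Kt ^ i) (Kt ^ j) * tensor (gen E ^ m) (gen F ^ m))"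
proof -
  have "tensor (gen E ^ m * kpi) (gen F ^ m * kpj) \<approx>
        tensor (smul (inverse q ^ (2 * i * m)) (p * (Kt ^ i * gen E ^ m))) (smul (q ^ (2 * j * m)) (p * (Kt ^ j * gen F ^ m)))"
    by (intro tensor_cong central_move[OF cen] kpi kpj Epow_Kt_pow Fpow_Kt_pow)
  also have "\<dots> = smul (inverse q ^ (2 * i * m) * q ^ (2 * j * m)) (tensor (p * (Kt ^ i * gen E ^ m)) (p * (Kt ^ j * gen F ^ m)))"
    by (simp add: tensor_smul1 tensor_smul2 mult.commute)
  also have "\<dots> \<approx> smul (inverse q ^ (2 * i * m) * q ^ (2 * j * m)) (tensor p p * tensor (Kt ^ i * gen E ^ m) (Kt ^ j * gen F ^ m))"
    by (rule cm_smul, rule cm_sym, rule tensor_mult)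
  also have "\<dots> \<approx> smul (inverse q ^ (2 * i * m) * q ^ (2 * j * m)) (tensor p p * (tensor (Kt ^ i) (Kt ^ j) * tensor (gen E ^ m) (gen F ^ m)))"
    by (rule cm_smul, rule cm_multL, rule cm_sym, rule tensor_mult)
  finally show ?thesis by (simp add: mult.assoc)
qed

lemma Acoef_factor: "Acoef q n i j m * (inverse q ^ (2 * i * m) * q ^ (2 * j * m)) = inverse q ^ (2 * i * j) / of_nat n * qcoef q m"
proof -
  let ?A = "m * (m - 1) div 2"
  have z: "int ?A + 2 * int m * (int i - int j) - 2 * int i * int j
      = (int ?A + int (2 * i * m)) - (int (2 * j * m) + int (2 * i * j))" by (simp add: algebra_simps)
  have p: "q powi (int ?A + 2 * int m * (int i - int j) - 2 * int i * int j)
      = q ^ ?A * q ^ (2 * i * m) / (q ^ (2 * j * m) * q ^ (2 * i * j))"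
    unfolding z using q_nz by (simp only: power_int_diff power_int_add power_int_of_nat simp_thms)
  have "Acoef q n i j m * (inverse q ^ (2 * i * m) * q ^ (2 * j * m))
      = (1 / of_nat n) * ((q - inverse q) ^ m / qfact q m) * q ^ ?A *
        ((q ^ (2 * i * m) * inverse q ^ (2 * i * m)) * (inverse q ^ (2 * j * m) * q ^ (2 * j * m))) * inverse q ^ (2 * i * j)"
    unfolding Acoef_def p by (simp add: divide_inverse mult_ac power_inverse)
  also have "\<dots> = inverse q ^ (2 * i * j) / of_nat n * qcoef q m"
    unfolding q_pow_inv by (simp add: qcoef_def divide_inverse mult_ac)
  finally show ?thesis .
qed

lemma cartan_expand: "cartan q n = (\<Sum>i<n. \<Sum>j<n. smul (inverse q ^ (2 * i * j) / of_nat n) (tensor (Kt ^ i) (Kt ^ j)))"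
proof -
  have "cartan q n = (\<Sum>j<n. \<Sum>i<n. smul (inverse q ^ (2 * i * j) / of_nat n) (tensor (Kt ^ i) (Kt ^ j)))"
    by (simp add: cartan_def kproj_def tensor_smul1 tensor_sum1 smul_sum mult.commute divide_inverse)
  also have "\<dots> = (\<Sum>i<n. \<Sum>j<n. smul (inverse q ^ (2 * i * j) / of_nat n) (tensor (Kt ^ i) (Kt ^ j)))"
    by (rule sum.swap)
  finally show ?thesis .
qed

lemma cartan_quasiR_expand: "p * cartan q n * quasiR q n = (\<Sum>i<n. \<Sum>j<n. \<Sum>m<n.
   smul (inverse q ^ (2 * i * j) / of_nat n * qcoef q m) (p * tensor (Kt ^ i) (Kt ^ j) * tensor (gen E ^ m) (gen F ^ m)))"
proof -
  have "p * cartan q n * quasiR q n = (\<Sum>i<n. \<Sum>j<n. (p * smul (inverse q ^ (2 * i * j) / of_nat n) (tensor (Kt ^ i) (Kt ^ j))) * quasiR q n)"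
    by (simp only: cartan_expand sum_distrib_left sum_distrib_right)
  also have "\<dots> = (\<Sum>i<n. \<Sum>j<n. \<Sum>m<n.
   smul (inverse q ^ (2 * i * j) / of_nat n * qcoef q m) (p * tensor (Kt ^ i) (Kt ^ j) * tensor (gen E ^ m) (gen F ^ m)))"
    by (simp add: quasiR_def sum_distrib_left mult.assoc mult.commute)
  finally show ?thesis .
qed

text \<open>Each summand of R-tilde factors: moving the central idempotent p and the Cartan
  powers to the left produces q-powers which combine with A^ij_m into the coefficients of
  H and X.\<close>

lemma Rtilde_factorization: "Rtilde q n \<approx> Rfact q n"
proof -
  let ?A = "(\<Sum>i<n. \<Sum>j<n. \<Sum>m<n. smul (Acoef q n i j m) (tensor (gen E ^ m * Kpow genP i) (gen F ^ m * Kpow genP j)))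
     + (\<Sum>i<n. \<Sum>j<n. \<Sum>m<n. smul (Acoef q n i j m) (tensor (gen E ^ m * Lpow genQ i) (gen F ^ m * Lpow genQ j)))"
  let ?B = "(\<Sum>i<n. \<Sum>j<n. \<Sum>m<n. smul (Acoef q n i j m) (smul (inverse q ^ (2 * i * m) * q ^ (2 * j * m))
        (tensor genP genP * tensor (Kt ^ i) (Kt ^ j) * tensor (gen E ^ m) (gen F ^ m))))
     + (\<Sum>i<n. \<Sum>j<n. \<Sum>m<n. smul (Acoef q n i j m) (smul (inverse q ^ (2 * i * m) * q ^ (2 * j * m))
        (tensor genQ genQ * tensor (Kt ^ i) (Kt ^ j) * tensor (gen E ^ m) (gen F ^ m))))"
  have unfold: "Rtilde q n = ?A" by (simp add: Rtilde_def tensor_def)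
  have move: "?A \<approx> ?B"
    by (intro cm_add cm_sum cm_smul) (rule tensor_summand[OF P_central Kpow_eq Kpow_eq], rule tensor_summand[OF Q_central Lpow_eq Lpow_eq])
  have collect: "?B = tensor genP genP * cartan q n * quasiR q n + tensor genQ genQ * cartan q n * quasiR q n"
    by (simp only: cartan_quasiR_expand smul_smul Acoef_factor)
  have combine: "tensor genP genP * cartan q n * quasiR q n + tensor genQ genQ * cartan q n * quasiR q n = unit_proj * cartan q n * quasiR q n"
    by (simp add: unit_proj_def algebra_simps)
  show ?thesis using move unfolding unfold collect combine Rfact_def .
qed

end

section \<open>The quasi-R-matrix X\<close>

text \<open>The coefficients a_m satisfy a_(m+1) [m+1]/(q - q^-1) = a_m q^m, which is exactly what
  makes the commutators of X with 1 (x) E and F (x) 1 telescope.\<close>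

context primitive_root
begin

lemma qcoef_0: "qcoef q 0 = 1" by (simp add: qcoef_def qfact_def)

lemma qcoef_rec: "Suc m < n \<Longrightarrow> qcoef q (Suc m) * (qint q (Suc m) / (q - inverse q)) = qcoef q m * q ^ m"
proof -
  assume h: "Suc m < n"
  have nz: "qint q (Suc m) \<noteq> 0" using qint_nz[of "Suc m"] h by simp
  have ex: "Suc m * (Suc m - 1) div 2 = m * (m - 1) div 2 + m"
  proof -
    have "Suc m * (Suc m - 1) = m * (m - 1) + 2 * m" by (cases m) (simp_all add: algebra_simps)
    then show ?thesis by simp
  qed
  have qf: "qfact q (Suc m) = qfact q m * qint q (Suc m)" by (simp add: qfact_def)
  show ?thesis
  proof (cases "qfact q m = 0")
    case True then show ?thesis unfolding qcoef_def qf ex by simp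
  next
    case False
    define D where "D = q - inverse q"
    have D: "D \<noteq> 0" using q_diff_nz by (simp add: D_def)
    show ?thesis using nz D False unfolding qcoef_def qf ex D_def[symmetric] by (simp add: power_add field_simps)
  qed
qed

text \<open>The commutator of 1 (x) E with X: by the formula for [E, F^(m+1)] the m-th summand of
  sum_m a_m E^m (x) [E, F^m] becomes the (m-1)-st summand of the right-hand side; the boundary
  terms vanish because E^n = 0.\<close>

lemma E_commutator_sum:
  "(\<Sum>m<n. smul (qcoef q m) (tensor (gen E ^ m) (gen E * gen F ^ m - gen F ^ m * gen E)))
   \<approx> (\<Sum>m<n. smul (qcoef q m) (tensor (gen E * gen E ^ m) (gen F ^ m * Kt))
           - smul (qcoef q m * q ^ (2 * m)) (tensor (gen E * gen E ^ m) (gen F ^ m * Kbt)))"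
  (is "(\<Sum>m<n. ?h m) \<approx> (\<Sum>m<n. ?k m)")
proof -
  obtain N where nN: "n = Suc N" using n_gt1 by (cases n) auto
  let ?e = "gen E" and ?f = "gen F" and ?a = "qcoef q"
  have "(\<Sum>m<Suc N. ?h m) \<approx> (\<Sum>m<Suc N. ?k m)"
  proof (rule sum_split_shift)
    show "?h 0 \<approx> 0" by simp
  next
    have "?e * ?e ^ N = ?e ^ n" by (simp add: nN)
    then have "?e * ?e ^ N \<sim> 0" using E_pow_n by simp
    then have "?k N \<approx> smul (?a N) (tensor 0 (?f ^ N * Kt)) - smul (?a N * q ^ (2 * N)) (tensor 0 (?f ^ N * Kbt))"
      by (intro cm_diff cm_smul tensor_cong1)
    then show "?k N \<approx> 0" by simp
  next
    fix m assume m: "m < N"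
    have c: "?a (Suc m) * (qint q (Suc m) / (q - inverse q)) = ?a m * q ^ m"
      using qcoef_rec[of m] m nN by simp
    have "?h (Suc m) \<approx> smul (?a (Suc m)) (tensor (?e ^ Suc m) (smul (qint q (Suc m) / (q - inverse q)) (?f ^ m * (smul (inverse q ^ m) Kt - smul (q ^ m) Kbt))))"
      by (intro cm_smul tensor_cong2 E_Fpow_commutator)
    also have "\<dots> = smul (?a (Suc m) * (qint q (Suc m) / (q - inverse q)) * inverse q ^ m) (tensor (?e ^ Suc m) (?f ^ m * Kt))
          - smul (?a (Suc m) * (qint q (Suc m) / (q - inverse q)) * q ^ m) (tensor (?e ^ Suc m) (?f ^ m * Kbt))"
      by (simp only: tensor_smul2 tensor_diff2 smul_smul smul_diff right_diff_distrib smul_right mult.assoc)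
    also have "\<dots> = ?k m" unfolding c by (simp add: mult.assoc q_pow_inv power_add[symmetric] mult_2)
    finally show "?h (Suc m) \<approx> ?k m" .
  qed
  then show ?thesis by (simp only: nN)
qed

lemma quasiR_E_commutator:
  "tensor 1 (gen E) * quasiR q n - quasiR q n * tensor 1 (gen E)
   \<approx> quasiR q n * tensor (gen E) Kt - tensor (gen E) Kbt * quasiR q n"
proof -
  let ?e = "gen E" and ?f = "gen F" and ?a = "qcoef q"
  have "tensor 1 ?e * quasiR q n - quasiR q n * tensor 1 ?e
      = (\<Sum>m<n. smul (?a m) (tensor 1 ?e * tensor (?e ^ m) (?f ^ m)) - smul (?a m) (tensor (?e ^ m) (?f ^ m) * tensor 1 ?e))"
    by (simp only: quasiR_def sum_distrib_left sum_distrib_right smul_left smul_right sum_subtractf)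
  also have "\<dots> \<approx> (\<Sum>m<n. smul (?a m) (tensor (?e ^ m) (?e * ?f ^ m)) - smul (?a m) (tensor (?e ^ m) (?f ^ m * ?e)))"
    by (intro cm_sum cm_diff cm_smul tensor_mult_1L tensor_mult_1R)
  also have "\<dots> = (\<Sum>m<n. smul (?a m) (tensor (?e ^ m) (?e * ?f ^ m - ?f ^ m * ?e)))"
    by (simp only: tensor_diff2 smul_diff)
  also have "\<dots> \<approx> (\<Sum>m<n. smul (?a m) (tensor (?e * ?e ^ m) (?f ^ m * Kt))
           - smul (?a m * q ^ (2 * m)) (tensor (?e * ?e ^ m) (?f ^ m * Kbt)))"
    by (rule E_commutator_sum)
  also have "\<dots> \<approx> (\<Sum>m<n. smul (?a m) (tensor (?e ^ m) (?f ^ m) * tensor ?e Kt)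
           - smul (?a m) (tensor ?e Kbt * tensor (?e ^ m) (?f ^ m)))"
  proof (intro cm_sum cm_diff)
    fix m
    have "tensor (?e ^ m) (?f ^ m) * tensor ?e Kt \<approx> tensor (?e * ?e ^ m) (?f ^ m * Kt)"
      using tensor_mult[of "?e ^ m" "?f ^ m" ?e Kt] by (simp add: power_commutes)
    then show "smul (?a m) (tensor (?e * ?e ^ m) (?f ^ m * Kt)) \<approx> smul (?a m) (tensor (?e ^ m) (?f ^ m) * tensor ?e Kt)"
      by (rule cm_smul[OF cm_sym])
    have "tensor ?e Kbt * tensor (?e ^ m) (?f ^ m) \<approx> tensor (?e * ?e ^ m) (Kbt * ?f ^ m)" by (rule tensor_mult)
    also have "\<dots> \<approx> tensor (?e * ?e ^ m) (smul (q ^ (2 * m)) (?f ^ m * Kbt))" by (intro tensor_cong2 Kbt_Fpow)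
    finally have h: "tensor ?e Kbt * tensor (?e ^ m) (?f ^ m) \<approx> smul (q ^ (2 * m)) (tensor (?e * ?e ^ m) (?f ^ m * Kbt))"
      by (simp add: tensor_smul2)
    show "smul (?a m * q ^ (2 * m)) (tensor (?e * ?e ^ m) (?f ^ m * Kbt)) \<approx> smul (?a m) (tensor ?e Kbt * tensor (?e ^ m) (?f ^ m))"
      using cm_sym[OF cm_smul[OF h, of "?a m"]] by simp
  qed
  also have "\<dots> = quasiR q n * tensor ?e Kt - tensor ?e Kbt * quasiR q n"
    by (simp only: quasiR_def sum_distrib_left sum_distrib_right smul_left smul_right sum_subtractf)
  finally show ?thesis .
qed

text \<open>X carries the "middle" coproduct E (x) Kbt + 1 (x) E of E to Delta(E) = 1 (x) E + E (x) Kt.\<close>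

lemma quasiR_E:
  "(tensor (gen E) Kbt + tensor 1 (gen E)) * quasiR q n \<approx> quasiR q n * (tensor 1 (gen E) + tensor (gen E) Kt)"
  using cm_diff_swap[OF quasiR_E_commutator] by (simp add: distrib_left distrib_right)

end

context primitive_root
begin

text \<open>Dually, the commutator of F (x) 1 with X, using the formula for [E^(m+1), F] and F^n = 0.\<close>

lemma F_commutator_sum:
  "(\<Sum>m<n. smul (qcoef q m) (tensor (gen E ^ m * gen F - gen F * gen E ^ m) (gen F ^ m)))
   \<approx> (\<Sum>m<n. smul (qcoef q m * q ^ (2 * m)) (tensor (gen E ^ m * Kt) (gen F * gen F ^ m))
           - smul (qcoef q m) (tensor (gen E ^ m * Kbt) (gen F * gen F ^ m)))"
  (is "(\<Sum>m<n. ?h m) \<approx> (\<Sum>m<n. ?k m)")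
proof -
  obtain N where nN: "n = Suc N" using n_gt1 by (cases n) auto
  let ?e = "gen E" and ?f = "gen F" and ?a = "qcoef q"
  have "(\<Sum>m<Suc N. ?h m) \<approx> (\<Sum>m<Suc N. ?k m)"
  proof (rule sum_split_shift)
    show "?h 0 \<approx> 0" by simp
  next
    have "?f * ?f ^ N = ?f ^ n" by (simp add: nN)
    then have "?f * ?f ^ N \<sim> 0" using F_pow_n by simp
    then have "?k N \<approx> smul (?a N * q ^ (2 * N)) (tensor (?e ^ N * Kt) 0) - smul (?a N) (tensor (?e ^ N * Kbt) 0)"
      by (intro cm_diff cm_smul tensor_cong2)
    then show "?k N \<approx> 0" by simp
  next
    fix m assume m: "m < N"
    have c: "?a (Suc m) * (qint q (Suc m) / (q - inverse q)) = ?a m * q ^ m"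
      using qcoef_rec[of m] m nN by simp
    have "?h (Suc m) \<approx> smul (?a (Suc m)) (tensor (smul (qint q (Suc m) / (q - inverse q)) (?e ^ m * (smul (q ^ m) Kt - smul (inverse q ^ m) Kbt))) (?f ^ Suc m))"
      by (intro cm_smul tensor_cong1 Epow_F_commutator)
    also have "\<dots> = smul (?a (Suc m) * (qint q (Suc m) / (q - inverse q)) * q ^ m) (tensor (?e ^ m * Kt) (?f ^ Suc m))
          - smul (?a (Suc m) * (qint q (Suc m) / (q - inverse q)) * inverse q ^ m) (tensor (?e ^ m * Kbt) (?f ^ Suc m))"
      by (simp only: tensor_smul1 tensor_diff1 smul_smul smul_diff right_diff_distrib smul_right mult.assoc)
    also have "\<dots> = ?k m" unfolding c by (simp add: mult.assoc q_pow_inv power_add[symmetric] mult_2)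
    finally show "?h (Suc m) \<approx> ?k m" .
  qed
  then show ?thesis by (simp only: nN)
qed

lemma quasiR_F_commutator:
  "quasiR q n * tensor (gen F) 1 - tensor (gen F) 1 * quasiR q n
   \<approx> tensor Kt (gen F) * quasiR q n - quasiR q n * tensor Kbt (gen F)"
proof -
  let ?e = "gen E" and ?f = "gen F" and ?a = "qcoef q"
  have "quasiR q n * tensor ?f 1 - tensor ?f 1 * quasiR q n
      = (\<Sum>m<n. smul (?a m) (tensor (?e ^ m) (?f ^ m) * tensor ?f 1) - smul (?a m) (tensor ?f 1 * tensor (?e ^ m) (?f ^ m)))"
    by (simp only: quasiR_def sum_distrib_left sum_distrib_right smul_left smul_right sum_subtractf)
  also have "\<dots> \<approx> (\<Sum>m<n. smul (?a m) (tensor (?e ^ m * ?f) (?f ^ m)) - smul (?a m) (tensor (?f * ?e ^ m) (?f ^ m)))"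
    by (intro cm_sum cm_diff cm_smul tensor_mult_R1 tensor_mult_L1)
  also have "\<dots> = (\<Sum>m<n. smul (?a m) (tensor (?e ^ m * ?f - ?f * ?e ^ m) (?f ^ m)))"
    by (simp only: tensor_diff1 smul_diff)
  also have "\<dots> \<approx> (\<Sum>m<n. smul (?a m * q ^ (2 * m)) (tensor (?e ^ m * Kt) (?f * ?f ^ m))
           - smul (?a m) (tensor (?e ^ m * Kbt) (?f * ?f ^ m)))"
    by (rule F_commutator_sum)
  also have "\<dots> \<approx> (\<Sum>m<n. smul (?a m) (tensor Kt ?f * tensor (?e ^ m) (?f ^ m))
           - smul (?a m) (tensor (?e ^ m) (?f ^ m) * tensor Kbt ?f))"
  proof (intro cm_sum cm_diff)
    fix m
    have "tensor Kt ?f * tensor (?e ^ m) (?f ^ m) \<approx> tensor (Kt * ?e ^ m) (?f * ?f ^ m)" by (rule tensor_mult)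
    also have "\<dots> \<approx> tensor (smul (q ^ (2 * m)) (?e ^ m * Kt)) (?f * ?f ^ m)" by (intro tensor_cong1 Kt_Epow)
    finally have h: "tensor Kt ?f * tensor (?e ^ m) (?f ^ m) \<approx> smul (q ^ (2 * m)) (tensor (?e ^ m * Kt) (?f * ?f ^ m))"
      by (simp add: tensor_smul1)
    show "smul (?a m * q ^ (2 * m)) (tensor (?e ^ m * Kt) (?f * ?f ^ m)) \<approx> smul (?a m) (tensor Kt ?f * tensor (?e ^ m) (?f ^ m))"
      using cm_sym[OF cm_smul[OF h, of "?a m"]] by simp
    have "tensor (?e ^ m) (?f ^ m) * tensor Kbt ?f \<approx> tensor (?e ^ m * Kbt) (?f * ?f ^ m)"
      using tensor_mult[of "?e ^ m" "?f ^ m" Kbt ?f] by (simp add: power_commutes)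
    then show "smul (?a m) (tensor (?e ^ m * Kbt) (?f * ?f ^ m)) \<approx> smul (?a m) (tensor (?e ^ m) (?f ^ m) * tensor Kbt ?f)"
      by (rule cm_smul[OF cm_sym])
  qed
  also have "\<dots> = tensor Kt ?f * quasiR q n - quasiR q n * tensor Kbt ?f"
    by (simp only: quasiR_def sum_distrib_left sum_distrib_right smul_left smul_right sum_subtractf)
  finally show ?thesis .
qed

text \<open>X carries the middle form Kt (x) F + F (x) 1 of F to Delta(F) = F (x) 1 + Kbt (x) F.\<close>

lemma quasiR_F:
  "(tensor Kt (gen F) + tensor (gen F) 1) * quasiR q n \<approx> quasiR q n * (tensor (gen F) 1 + tensor Kbt (gen F))"
  using cm_sym[OF cm_diff_swap[OF quasiR_F_commutator]] by (simp add: distrib_left distrib_right add.commute)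

end

section \<open>The Cartan part H\<close>

context primitive_root
begin

lemma Kt_pow_periodic: "Kt ^ (a + n) \<sim> Kt ^ a"
proof -
  have "Kt ^ (a + n) = Kt ^ a * Kt ^ n" by (simp add: power_add)
  also have "\<dots> \<sim> Kt ^ a * 1" by (rule cm_multL[OF Kt_pow_n])
  finally show ?thesis by simp
qed

lemma Kt_pow_Kbt: "Kt ^ j * Kbt \<sim> Kt ^ (j + n - 1)"
proof -
  have "Kt ^ j * Kbt \<sim> Kt ^ j * Kt ^ (n - 1)" by (rule cm_multL[OF Kbt_eq_Kt_pow])
  also have "Kt ^ j * Kt ^ (n - 1) = Kt ^ (j + n - 1)" using n_gt1 by (simp add: power_add[symmetric])
  finally show ?thesis .
qed

lemma Kbt_Kt_pow: "Kbt * Kt ^ j \<sim> Kt ^ (j + n - 1)"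
proof -
  have "Kbt * Kt ^ j \<sim> Kt ^ (n - 1) * Kt ^ j" by (rule cm_multR[OF Kbt_eq_Kt_pow])
  also have "Kt ^ (n - 1) * Kt ^ j = Kt ^ (j + n - 1)" using n_gt1 by (simp add: power_add[symmetric] add.commute)
  finally show ?thesis .
qed

text \<open>H turns the opposite coproduct of E, E (x) 1 + Kt (x) E, into the middle form
  E (x) Kbt + 1 (x) E.  For E (x) 1 this is the index shift pi_j E = E pi_(j-1), absorbed by
  the periodicity of j \<mapsto> pi_j (x) Kt^j; for Kt (x) E the eigenvalues q^(2j) of Kt on pi_j
  cancel against the commutation of E with Kt^j.\<close>

lemma cartan_E_left: "tensor (gen E) 1 * cartan q n \<approx> cartan q n * tensor (gen E) Kbt"
proof -
  let ?e = "gen E"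
  let ?g = "\<lambda>j. tensor (\<pi> j * ?e) (Kt ^ (j + n - 1))"
  have "tensor ?e 1 * cartan q n = (\<Sum>j<n. tensor ?e 1 * tensor (\<pi> j) (Kt ^ j))"
    by (simp add: cartan_def sum_distrib_left)
  also have "\<dots> \<approx> (\<Sum>j<n. tensor (?e * \<pi> j) (Kt ^ j))" by (intro cm_sum tensor_mult_L1)
  also have "\<dots> \<approx> (\<Sum>j<n. ?g (j + 1))"
  proof (intro cm_sum tensor_cong)
    fix j show "?e * \<pi> j \<sim> \<pi> (j + 1) * ?e" using E_proj by simp
    show "Kt ^ j \<sim> Kt ^ (j + 1 + n - 1)" using cm_sym[OF Kt_pow_periodic[of j]] by simp
  qed
  also have "\<dots> \<approx> (\<Sum>j<n. ?g j)"
  proof (rule sum_shift_periodic)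
    fix j
    have "Kt ^ (j + n + n - 1) = Kt ^ ((j + n - 1) + n)" using n_gt1 by (simp add: algebra_simps)
    then have "Kt ^ (j + n + n - 1) \<sim> Kt ^ (j + n - 1)" using Kt_pow_periodic[of "j + n - 1"] by simp
    then show "?g (j + n) \<approx> ?g j" by (simp add: proj_periodic tensor_cong2)
  qed
  also have "\<dots> \<approx> (\<Sum>j<n. tensor (\<pi> j * ?e) (Kt ^ j * Kbt))" by (intro cm_sum tensor_cong2 cm_sym[OF Kt_pow_Kbt])
  also have "\<dots> \<approx> (\<Sum>j<n. tensor (\<pi> j) (Kt ^ j) * tensor ?e Kbt)" by (intro cm_sum cm_sym[OF tensor_mult])
  also have "\<dots> = cartan q n * tensor ?e Kbt" by (simp add: cartan_def sum_distrib_right)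
  finally show ?thesis .
qed

lemma cartan_E_right: "tensor Kt (gen E) * cartan q n \<approx> cartan q n * tensor 1 (gen E)"
proof -
  let ?e = "gen E"
  have "tensor Kt ?e * cartan q n = (\<Sum>j<n. tensor Kt ?e * tensor (\<pi> j) (Kt ^ j))"
    by (simp add: cartan_def sum_distrib_left)
  also have "\<dots> \<approx> (\<Sum>j<n. tensor (Kt * \<pi> j) (?e * Kt ^ j))" by (intro cm_sum tensor_mult)
  also have "\<dots> \<approx> (\<Sum>j<n. tensor (smul (q ^ (2 * j)) (\<pi> j)) (smul (inverse q ^ (2 * j)) (Kt ^ j * ?e)))"
    by (intro cm_sum tensor_cong Kt_proj E_Kt_pow)
  also have "\<dots> = (\<Sum>j<n. tensor (\<pi> j) (Kt ^ j * ?e))"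
    by (simp add: tensor_smul1 tensor_smul2 q_pow_inv)
  also have "\<dots> \<approx> (\<Sum>j<n. tensor (\<pi> j) (Kt ^ j) * tensor 1 ?e)" by (intro cm_sum cm_sym[OF tensor_mult_1R])
  also have "\<dots> = cartan q n * tensor 1 ?e" by (simp add: cartan_def sum_distrib_right)
  finally show ?thesis .
qed

lemma cartan_E: "(tensor (gen E) 1 + tensor Kt (gen E)) * cartan q n \<approx> cartan q n * (tensor (gen E) Kbt + tensor 1 (gen E))"
  unfolding distrib_left distrib_right by (intro cm_add cartan_E_left cartan_E_right)

lemma cartan_F_left: "tensor 1 (gen F) * cartan q n \<approx> cartan q n * tensor Kt (gen F)"
proof -
  let ?f = "gen F"
  have "tensor 1 ?f * cartan q n = (\<Sum>j<n. tensor 1 ?f * tensor (\<pi> j) (Kt ^ j))"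
    by (simp add: cartan_def sum_distrib_left)
  also have "\<dots> \<approx> (\<Sum>j<n. tensor (\<pi> j) (?f * Kt ^ j))" by (intro cm_sum tensor_mult_1L)
  also have "\<dots> \<approx> (\<Sum>j<n. tensor (\<pi> j) (smul (q ^ (2 * j)) (Kt ^ j * ?f)))" by (intro cm_sum tensor_cong2 F_Kt_pow)
  also have "\<dots> = (\<Sum>j<n. tensor (smul (q ^ (2 * j)) (\<pi> j)) (Kt ^ j * ?f))"
    by (simp add: tensor_smul1 tensor_smul2)
  also have "\<dots> \<approx> (\<Sum>j<n. tensor (\<pi> j * Kt) (Kt ^ j * ?f))"
  proof -
    have eig: "\<pi> j * Kt \<sim> smul (q ^ (2 * j)) (\<pi> j)" for j using proj_Kt_pow[of j 1] by simp
    show ?thesis by (intro cm_sum tensor_cong1 cm_sym[OF eig])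
  qed
  also have "\<dots> \<approx> (\<Sum>j<n. tensor (\<pi> j) (Kt ^ j) * tensor Kt ?f)" by (intro cm_sum cm_sym[OF tensor_mult])
  also have "\<dots> = cartan q n * tensor Kt ?f" by (simp add: cartan_def sum_distrib_right)
  finally show ?thesis .
qed

lemma cartan_F_right: "tensor (gen F) Kbt * cartan q n \<approx> cartan q n * tensor (gen F) 1"
proof -
  let ?f = "gen F"
  let ?g = "\<lambda>j. tensor (\<pi> j * ?f) (Kt ^ j)"
  have "tensor ?f Kbt * cartan q n = (\<Sum>j<n. tensor ?f Kbt * tensor (\<pi> j) (Kt ^ j))"
    by (simp add: cartan_def sum_distrib_left)
  also have "\<dots> \<approx> (\<Sum>j<n. tensor (?f * \<pi> j) (Kbt * Kt ^ j))" by (intro cm_sum tensor_mult)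
  also have "\<dots> \<approx> (\<Sum>j<n. ?g (j + (n - 1)))"
  proof (intro cm_sum tensor_cong)
    fix j
    show "?f * \<pi> j \<sim> \<pi> (j + (n - 1)) * ?f" using F_proj[of j] n_gt1 by simp
    show "Kbt * Kt ^ j \<sim> Kt ^ (j + (n - 1))" using Kbt_Kt_pow[of j] n_gt1 by simp
  qed
  also have "\<dots> \<approx> (\<Sum>j<n. ?g j)"
  proof (rule sum_shift_periodic)
    fix j show "?g (j + n) \<approx> ?g j" by (simp add: proj_periodic tensor_cong2 Kt_pow_periodic)
  qed
  also have "\<dots> \<approx> (\<Sum>j<n. tensor (\<pi> j) (Kt ^ j) * tensor ?f 1)" by (intro cm_sum cm_sym[OF tensor_mult_R1])
  also have "\<dots> = cartan q n * tensor ?f 1" by (simp add: cartan_def sum_distrib_right)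
  finally show ?thesis .
qed

lemma cartan_F: "(tensor 1 (gen F) + tensor (gen F) Kbt) * cartan q n \<approx> cartan q n * (tensor Kt (gen F) + tensor (gen F) 1)"
  unfolding distrib_left distrib_right by (intro cm_add cartan_F_left cartan_F_right)

text \<open>H is invertible: by orthogonality of the pi_j its inverse is sum_l pi_l (x) Kt^(n-l).\<close>

lemma cartan_cartan_inv: "cartan q n * cartan_inv q n \<approx> 1"
proof -
  have "cartan q n * cartan_inv q n = (\<Sum>j<n. \<Sum>l<n. tensor (\<pi> j) (Kt ^ j) * tensor (\<pi> l) (Kt ^ (n - l)))"
    by (simp add: cartan_def cartan_inv_def sum_product)
  also have "\<dots> \<approx> (\<Sum>j<n. \<Sum>l<n. tensor (\<pi> j * \<pi> l) (Kt ^ j * Kt ^ (n - l)))"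
    by (intro cm_sum tensor_mult)
  also have "\<dots> \<approx> (\<Sum>j<n. \<Sum>l<n. tensor (if j = l then \<pi> j else 0) (Kt ^ j * Kt ^ (n - l)))"
    by (intro cm_sum tensor_cong1 proj_orth) auto
  also have "\<dots> = (\<Sum>j<n. \<Sum>l<n. if j = l then tensor (\<pi> j) (Kt ^ j * Kt ^ (n - l)) else 0)"
    by (intro sum.cong refl) auto
  also have "\<dots> = (\<Sum>j<n. tensor (\<pi> j) (Kt ^ n))"
  proof (rule sum.cong[OF refl])
    fix j assume "j \<in> {..<n}"
    then have "Kt ^ j * Kt ^ (n - j) = Kt ^ n" by (simp add: power_add[symmetric])
    then show "(\<Sum>l<n. if j = l then tensor (\<pi> j) (Kt ^ j * Kt ^ (n - l)) else 0) = tensor (\<pi> j) (Kt ^ n)"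
      using \<open>j \<in> {..<n}\<close> by simp
  qed
  also have "\<dots> \<approx> (\<Sum>j<n. tensor (\<pi> j) 1)" by (intro cm_sum tensor_cong2 Kt_pow_n)
  also have "\<dots> = tensor (\<Sum>j<n. \<pi> j) 1" by (simp add: tensor_sum1)
  also have "\<dots> = 1" by (simp add: proj_sum)
  finally show ?thesis .
qed

end

section \<open>The intertwining property\<close>

context primitive_root
begin

text \<open>Kt (x) Kt commutes with H and with X (the q-powers from E^m and F^m cancel), hence
  with Rfact = e H X; so does its power Kbt (x) Kbt.\<close>

lemma KtKt_commutes_cartan: "commutes (tensor Kt Kt) (cartan q n)"
  unfolding cartan_def by (intro commutes_sum tensor_commutes) (simp_all add: proj_Kt_comm power_commutes)

lemma KtKt_commutes_quasiR: "commutes (tensor Kt Kt) (quasiR q n)"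
  unfolding quasiR_def
proof (intro commutes_sum commutes_smul)
  fix m
  show "commutes (tensor Kt Kt) (tensor (gen E ^ m) (gen F ^ m))"
    by (rule tensor_commutes_scaled[OF Kt_Epow]) (use Kt_pow_Fpow[of 1 m] q_pow_inv[of "2*m"] in simp_all)
qed

lemma KtKt_commutes_Rfact: "commutes (tensor Kt Kt) (Rfact q n)"
  unfolding Rfact_def
  by (intro commutes_mult KtKt_commutes_cartan KtKt_commutes_quasiR commutes_sym[OF central_commutes] unit_proj_central)

lemma intertwines_via:
  assumes "Delta_cop g \<approx> Z" "Delta g \<approx> Z" "commutes Z (Rfact q n)"
  shows "Delta_cop g * Rfact q n \<approx> Rfact q n * Delta g"
proof -
  have "Delta_cop g * Rfact q n \<approx> Z * Rfact q n" by (rule cm_multR[OF assms(1)])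
  also have "\<dots> \<approx> Rfact q n * Z" using assms(3) by (simp add: commutes_def)
  also have "\<dots> \<approx> Rfact q n * Delta g" by (rule cm_multL[OF cm_sym[OF assms(2)]])
  finally show ?thesis .
qed

lemma PP_commutes: "commutes (tensor genP genP) y" by (rule central_commutes) (rule PP_central)
lemma QQ_commutes: "commutes (tensor genQ genQ) y" by (rule central_commutes) (rule QQ_central)
lemma PQ_commutes: "commutes (tensor genP genQ) y" by (rule central_commutes) (rule tensor_central; rule P_central Q_central)
lemma QP_commutes: "commutes (tensor genQ genP) y" by (rule central_commutes) (rule tensor_central; rule P_central Q_central)

lemma KbtKbt_commutes_Rfact: "commutes (tensor Kbt Kbt) (Rfact q n)"
proof -
  have "commutes (tensor Kt Kt ^ (n - 1)) (Rfact q n)" using commutes_power[OF commutes_sym[OF KtKt_commutes_Rfact]] by (rule commutes_sym)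
  moreover have "tensor Kt Kt ^ (n - 1) \<approx> tensor Kbt Kbt"
    by (rule cm_trans[OF tensor_pow]) (intro tensor_cong cm_sym[OF Kbt_eq_Kt_pow])
  ultimately show ?thesis by (meson commutes_cong commutes_sym)
qed

text \<open>The Cartan generators: both coproducts of K, Kb, L, Lb reduce to combinations of
  central idempotents times Kt (x) Kt or Kbt (x) Kbt.\<close>

lemma intertwines_K: "Delta_cop (gen K) * Rfact q n \<approx> Rfact q n * Delta (gen K)"
proof (rule intertwines_via)
  show "Delta (gen K) \<approx> tensor genP genP * tensor Kt Kt"
    by (simp add: Delta_gen_eq gl_tensor gr_tensor tensor_left_right) (intro tensor_split K_eq)
  show "Delta_cop (gen K) \<approx> tensor genP genP * tensor Kt Kt"
    by (simp add: Dcop_gen_eq rename_flip_gl rename_flip_gr, simp add: gl_tensor gr_tensor)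
      (rule cm_trans[OF tensor_mult], simp, intro tensor_split K_eq)
  show "commutes (tensor genP genP * tensor Kt Kt) (Rfact q n)" by (intro commutes_mult1 PP_commutes KtKt_commutes_Rfact)
qed

lemma intertwines_Kb: "Delta_cop (gen Kb) * Rfact q n \<approx> Rfact q n * Delta (gen Kb)"
proof (rule intertwines_via)
  show "Delta (gen Kb) \<approx> tensor genP genP * tensor Kbt Kbt"
    by (simp add: Delta_gen_eq gl_tensor gr_tensor tensor_left_right) (intro tensor_split Kb_eq)
  show "Delta_cop (gen Kb) \<approx> tensor genP genP * tensor Kbt Kbt"
    by (simp add: Dcop_gen_eq rename_flip_gl rename_flip_gr, simp add: gl_tensor gr_tensor)
      (rule cm_trans[OF tensor_mult], simp, intro tensor_split Kb_eq)
  show "commutes (tensor genP genP * tensor Kbt Kbt) (Rfact q n)" by (intro commutes_mult1 PP_commutes KbtKbt_commutes_Rfact)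
qed

lemma intertwines_L: "Delta_cop (gen L) * Rfact q n \<approx> Rfact q n * Delta (gen L)"
proof (rule intertwines_via)
  let ?Z = "tensor genQ genQ * tensor Kt Kt + tensor genQ genP * tensor Kt Kt + tensor genP genQ * tensor Kt Kt"
  show "Delta (gen L) \<approx> ?Z"
    by (simp add: Delta_gen_eq gl_tensor gr_tensor tensor_left_right) (intro cm_add tensor_split L_eq K_eq)
  have "Delta_cop (gen L) = tensor 1 (gen L) * tensor (gen L) 1 + tensor 1 (gen L) * tensor (gen K) 1 + tensor 1 (gen K) * tensor (gen L) 1"
    by (simp add: Dcop_gen_eq rename_flip_gl rename_flip_gr, simp add: gl_tensor gr_tensor)
  also have "\<dots> \<approx> tensor (gen L) (gen L) + tensor (gen K) (gen L) + tensor (gen L) (gen K)"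
    by (intro cm_add; rule cm_trans[OF tensor_mult], simp)
  also have "\<dots> \<approx> tensor genQ genQ * tensor Kt Kt + tensor genP genQ * tensor Kt Kt + tensor genQ genP * tensor Kt Kt"
    by (intro cm_add tensor_split L_eq K_eq)
  also have "\<dots> = ?Z" by (simp add: add_ac)
  finally show "Delta_cop (gen L) \<approx> ?Z" .
  show "commutes ?Z (Rfact q n)"
    by (rule commutes_sym) (intro commutes_add commutes_mult commutes_sym[OF QQ_commutes] commutes_sym[OF QP_commutes] commutes_sym[OF PQ_commutes] commutes_sym[OF KtKt_commutes_Rfact])
qed

lemma intertwines_Lb: "Delta_cop (gen Lb) * Rfact q n \<approx> Rfact q n * Delta (gen Lb)"
proof (rule intertwines_via)
  let ?Z = "tensor genQ genQ * tensor Kbt Kbt + tensor genQ genP * tensor Kbt Kbt + tensor genP genQ * tensor Kbt Kbt"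
  show "Delta (gen Lb) \<approx> ?Z"
    by (simp add: Delta_gen_eq gl_tensor gr_tensor tensor_left_right) (intro cm_add tensor_split Lb_eq Kb_eq)
  have "Delta_cop (gen Lb) = tensor 1 (gen Lb) * tensor (gen Lb) 1 + tensor 1 (gen Lb) * tensor (gen Kb) 1 + tensor 1 (gen Kb) * tensor (gen Lb) 1"
    by (simp add: Dcop_gen_eq rename_flip_gl rename_flip_gr, simp add: gl_tensor gr_tensor)
  also have "\<dots> \<approx> tensor (gen Lb) (gen Lb) + tensor (gen Kb) (gen Lb) + tensor (gen Lb) (gen Kb)"
    by (intro cm_add; rule cm_trans[OF tensor_mult], simp)
  also have "\<dots> \<approx> tensor genQ genQ * tensor Kbt Kbt + tensor genP genQ * tensor Kbt Kbt + tensor genQ genP * tensor Kbt Kbt"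
    by (intro cm_add tensor_split Lb_eq Kb_eq)
  also have "\<dots> = ?Z" by (simp add: add_ac)
  finally show "Delta_cop (gen Lb) \<approx> ?Z" .
  show "commutes ?Z (Rfact q n)"
    by (rule commutes_sym) (intro commutes_add commutes_mult commutes_sym[OF QQ_commutes] commutes_sym[OF QP_commutes] commutes_sym[OF PQ_commutes] commutes_sym[OF KbtKbt_commutes_Rfact])
qed

lemma unit_proj_move: "W * Rfact q n \<approx> unit_proj * (W * cartan q n) * quasiR q n"
proof -
  have "W * Rfact q n = (W * unit_proj) * (cartan q n * quasiR q n)" by (simp add: Rfact_def mult.assoc)
  also have "\<dots> \<approx> (unit_proj * W) * (cartan q n * quasiR q n)" by (rule cm_multR, rule cm_sym, rule unit_proj_central)
  finally show ?thesis by (simp add: mult.assoc)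
qed

lemma intertwines_E: "Delta_cop (gen E) * Rfact q n \<approx> Rfact q n * Delta (gen E)"
proof -
  have dE: "Delta (gen E) = tensor 1 (gen E) + tensor (gen E) Kt"
    by (simp add: Delta_gen_eq gl_tensor gr_tensor Kt_def tensor_add2[symmetric] tensor_left_right)
  have "Delta_cop (gen E) = tensor (gen E) 1 + tensor 1 (gen E) * tensor Kt 1"
    by (simp add: Dcop_gen_eq rename_flip_gl rename_flip_gr, simp add: gl_tensor gr_tensor Kt_def tensor_add1[symmetric])
  also have "\<dots> \<approx> tensor (gen E) 1 + tensor Kt (gen E)" by (intro cm_add cm_refl) (rule cm_trans[OF tensor_mult], simp)
  finally have dc: "Delta_cop (gen E) \<approx> tensor (gen E) 1 + tensor Kt (gen E)" .
  have "Delta_cop (gen E) * Rfact q n \<approx> (tensor (gen E) 1 + tensor Kt (gen E)) * Rfact q n" by (rule cm_multR[OF dc])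
  also have "\<dots> \<approx> unit_proj * ((tensor (gen E) 1 + tensor Kt (gen E)) * cartan q n) * quasiR q n" by (rule unit_proj_move)
  also have "\<dots> \<approx> unit_proj * (cartan q n * (tensor (gen E) Kbt + tensor 1 (gen E))) * quasiR q n" by (intro cm_multL cm_multR cartan_E)
  also have "\<dots> = unit_proj * cartan q n * ((tensor (gen E) Kbt + tensor 1 (gen E)) * quasiR q n)" by (simp add: mult.assoc)
  also have "\<dots> \<approx> unit_proj * cartan q n * (quasiR q n * (tensor 1 (gen E) + tensor (gen E) Kt))" by (intro cm_multL quasiR_E)
  also have "\<dots> = Rfact q n * Delta (gen E)" by (simp add: Rfact_def dE mult.assoc)
  finally show ?thesis .
qed

lemma intertwines_F: "Delta_cop (gen F) * Rfact q n \<approx> Rfact q n * Delta (gen F)"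
proof -
  have dF: "Delta (gen F) = tensor (gen F) 1 + tensor Kbt (gen F)"
    by (simp add: Delta_gen_eq gl_tensor gr_tensor Kbt_def tensor_add1[symmetric] tensor_left_right)
  have "Delta_cop (gen F) = tensor 1 (gen F) + tensor 1 Kbt * tensor (gen F) 1"
    by (simp add: Dcop_gen_eq rename_flip_gl rename_flip_gr, simp add: gl_tensor gr_tensor Kbt_def tensor_add2[symmetric])
  also have "\<dots> \<approx> tensor 1 (gen F) + tensor (gen F) Kbt" by (intro cm_add cm_refl) (rule cm_trans[OF tensor_mult], simp)
  finally have dc: "Delta_cop (gen F) \<approx> tensor 1 (gen F) + tensor (gen F) Kbt" .
  have "Delta_cop (gen F) * Rfact q n \<approx> (tensor 1 (gen F) + tensor (gen F) Kbt) * Rfact q n" by (rule cm_multR[OF dc])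
  also have "\<dots> \<approx> unit_proj * ((tensor 1 (gen F) + tensor (gen F) Kbt) * cartan q n) * quasiR q n" by (rule unit_proj_move)
  also have "\<dots> \<approx> unit_proj * (cartan q n * (tensor Kt (gen F) + tensor (gen F) 1)) * quasiR q n" by (intro cm_multL cm_multR cartan_F)
  also have "\<dots> = unit_proj * cartan q n * ((tensor Kt (gen F) + tensor (gen F) 1) * quasiR q n)" by (simp add: mult.assoc)
  also have "\<dots> \<approx> unit_proj * cartan q n * (quasiR q n * (tensor (gen F) 1 + tensor Kbt (gen F)))" by (intro cm_multL quasiR_F)
  also have "\<dots> = Rfact q n * Delta (gen F)" by (simp add: Rfact_def dF mult.assoc)
  finally show ?thesis .
qed

lemma Rfact_intertwines: "Delta_cop b * Rfact q n \<approx> Rfact q n * Delta b"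
proof (induction b rule: free_induct)
  case (1 c) then show ?case by (simp add: Delta_sc Dcop_sc)
next
  case (2 x) then show ?case
    by (cases x) (simp_all add: intertwines_K intertwines_Kb intertwines_L intertwines_Lb intertwines_E intertwines_F)
next
  case (3 a b) then show ?case by (simp add: Delta_add Dcop_add distrib_left distrib_right cm_add)
next
  case (4 a b)
  have "Delta_cop (a * b) * Rfact q n = Delta_cop a * (Delta_cop b * Rfact q n)" by (simp add: Dcop_mult mult.assoc)
  also have "\<dots> \<approx> Delta_cop a * (Rfact q n * Delta b)" by (rule cm_multL[OF 4(2)])
  also have "\<dots> = (Delta_cop a * Rfact q n) * Delta b" by (simp add: mult.assoc)
  also have "\<dots> \<approx> (Rfact q n * Delta a) * Delta b" by (rule cm_multR[OF 4(1)])
  also have "\<dots> = Rfact q n * Delta (a * b)" by (simp add: Delta_mult mult.assoc)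
  finally show ?case .
qed

lemma Rtilde_intertwines: "Delta_cop b * Rtilde q n \<approx> Rtilde q n * Delta b"
proof -
  have "Delta_cop b * Rtilde q n \<approx> Delta_cop b * Rfact q n" by (rule cm_multL[OF Rtilde_factorization])
  also have "\<dots> \<approx> Rfact q n * Delta b" by (rule Rfact_intertwines)
  also have "\<dots> \<approx> Rtilde q n * Delta b" by (rule cm_multR[OF cm_sym[OF Rtilde_factorization]])
  finally show ?thesis .
qed

section \<open>The generalized inverse\<close>

text \<open>X = 1 + (E (x) F) S with S commuting with E (x) F, and (E (x) F)^n = 0, so the
  truncated geometric series in 1 - X inverts X; with the inverse of H this gives
  R-dagger = X^(-1) H^(-1) e, and R R-dagger = e.\<close>

definition EF_tensor :: "(G + G) free" where
  "EF_tensor = tensor (gen E) (gen F)"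
definition quasiR_poly :: "(G + G) free" where
  "quasiR_poly = (\<Sum>m<n. smul (qcoef q m) (EF_tensor ^ m))"
definition quasiR_poly_inv :: "(G + G) free" where
  "quasiR_poly_inv = (\<Sum>k<n. (1 - quasiR_poly) ^ k)"
definition Rdagger :: "(G + G) free" where
  "Rdagger = quasiR_poly_inv * cartan_inv q n * unit_proj"

lemma quasiR_eq_poly: "quasiR q n \<approx> quasiR_poly"
  unfolding quasiR_def quasiR_poly_def EF_tensor_def by (intro cm_sum cm_smul cm_sym[OF tensor_pow])

lemma quasiR_poly_right_inv: "quasiR_poly * quasiR_poly_inv \<approx> 1"
proof -
  obtain N where nN: "n = Suc N" using n_gt1 by (cases n) auto
  let ?S = "\<Sum>m<N. smul (qcoef q (Suc m)) (EF_tensor ^ m)"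
  have "quasiR_poly = (\<Sum>m<Suc N. smul (qcoef q m) (EF_tensor ^ m))" unfolding quasiR_poly_def by (simp only: nN)
  also have "\<dots> = (\<Sum>m<N. smul (qcoef q (Suc m)) (EF_tensor ^ Suc m)) + smul (qcoef q 0) (EF_tensor ^ 0)"
    by (simp only: sum.lessThan_Suc_shift add.commute)
  also have "\<dots> = 1 + EF_tensor * ?S" by (simp add: qcoef_0 sum_distrib_left)
  finally have X1: "1 - quasiR_poly = EF_tensor * (- ?S)" by simp
  have comm: "EF_tensor * (- ?S) = (- ?S) * EF_tensor"
    by (simp add: sum_distrib_left sum_distrib_right power_commutes)
  have "quasiR_poly * quasiR_poly_inv = (1 - (1 - quasiR_poly)) * (\<Sum>k<n. (1 - quasiR_poly) ^ k)" by (simp add: quasiR_poly_inv_def)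
  also have "\<dots> = 1 - (1 - quasiR_poly) ^ n" by (rule geometric_telescope)
  also have "\<dots> = 1 - EF_tensor ^ n * (- ?S) ^ n" by (simp only: X1 power_mult_commuting[OF comm])
  also have "\<dots> \<approx> 1 - tensor (gen E ^ n) (gen F ^ n) * (- ?S) ^ n"
    unfolding EF_tensor_def by (intro cm_diff cm_refl cm_multR tensor_pow)
  also have "\<dots> \<approx> 1 - tensor 0 (gen F ^ n) * (- ?S) ^ n" by (intro cm_diff cm_refl cm_multR tensor_cong1 E_pow_n)
  finally show ?thesis by simp
qed

lemma quasiR_right_inv: "quasiR q n * quasiR_poly_inv \<approx> 1"
  by (rule cm_trans[OF cm_multR[OF quasiR_eq_poly] quasiR_poly_right_inv])

lemma Rfact_Rdagger: "Rfact q n * Rdagger \<approx> unit_proj"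
proof -
  have "Rfact q n * Rdagger = unit_proj * cartan q n * (quasiR q n * quasiR_poly_inv) * cartan_inv q n * unit_proj" by (simp add: Rfact_def Rdagger_def mult.assoc)
  also have "\<dots> \<approx> unit_proj * cartan q n * 1 * cartan_inv q n * unit_proj" by (intro cm_multR cm_multL quasiR_right_inv)
  also have "\<dots> = unit_proj * (cartan q n * cartan_inv q n) * unit_proj" by (simp add: mult.assoc)
  also have "\<dots> \<approx> unit_proj * 1 * unit_proj" by (intro cm_multR cm_multL cartan_cartan_inv)
  also have "\<dots> \<approx> unit_proj" using unit_proj_idem by simp
  finally show ?thesis .
qed

lemma unit_proj_Rfact: "unit_proj * Rfact q n \<approx> Rfact q n"
  unfolding Rfact_def mult.assoc[symmetric] by (intro cm_multR unit_proj_idem)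

lemma Rdagger_unit_proj: "Rdagger * unit_proj \<approx> Rdagger"
  unfolding Rdagger_def mult.assoc by (intro cm_multL unit_proj_idem)

lemma Rtilde_Rdagger_Rtilde: "Rtilde q n * Rdagger * Rtilde q n \<approx> Rtilde q n"
proof -
  have "Rtilde q n * Rdagger * Rtilde q n \<approx> Rfact q n * Rdagger * Rfact q n" by (intro cm_mult cm_refl Rtilde_factorization)
  also have "\<dots> \<approx> unit_proj * Rfact q n" by (intro cm_multR Rfact_Rdagger)
  also have "\<dots> \<approx> Rfact q n" by (rule unit_proj_Rfact)
  also have "\<dots> \<approx> Rtilde q n" by (rule cm_sym[OF Rtilde_factorization])
  finally show ?thesis .
qed

lemma Rdagger_Rtilde_Rdagger: "Rdagger * Rtilde q n * Rdagger \<approx> Rdagger"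
proof -
  have "Rdagger * Rtilde q n * Rdagger \<approx> Rdagger * Rfact q n * Rdagger" by (intro cm_mult cm_refl Rtilde_factorization)
  also have "\<dots> = Rdagger * (Rfact q n * Rdagger)" by (simp add: mult.assoc)
  also have "\<dots> \<approx> Rdagger * unit_proj" by (intro cm_multL Rfact_Rdagger)
  also have "\<dots> \<approx> Rdagger" by (rule Rdagger_unit_proj)
  finally show ?thesis .
qed

end

theorem mainTheorem14:
  fixes n :: nat and q :: complex
  assumes "odd n" and "n > 1"
    and "q ^ n = 1" and "\<forall>k. 0 < k \<and> k < n \<longrightarrow> q ^ k \<noteq> 1"
  shows "(\<forall>b :: G free. cong_mod (rels_tensor q n)
            (Delta_cop b * Rtilde q n) (Rtilde q n * Delta b))
       \<and> (\<exists>Rd :: (G + G) free.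
            cong_mod (rels_tensor q n) (Rtilde q n * Rd * Rtilde q n) (Rtilde q n)
          \<and> cong_mod (rels_tensor q n) (Rd * Rtilde q n * Rd) Rd)"
proof -
  interpret primitive_root q n using assms by unfold_locales auto
  show ?thesis using Rtilde_intertwines Rtilde_Rdagger_Rtilde Rdagger_Rtilde_Rdagger by blast
qed

end
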